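(* Let $F$ be an infinite field and $n=3$. There is no infinite sequence $f_1,f_2,\dots$ of polynomials of type $(1,1)$ such that $f_i\notin\langle\{f_1,\dots,f_{i-1}\}\cup I\rangle_{T_{\mathbb{Z}_3}}$ for all $i\ge2$. Consequently, for every $T_{\mathbb{Z}_3}$-ideal $J\supseteq I$, there is a finite set $\mathcal{A}'$ of polynomials of type $(1,1)$ in $J$ such that every polynomial of type $(1,1)$ in $J$ lies in $\langle\mathcal{A}'\cup I\rangle_{T_{\mathbb{Z}_3}}$.
   Context: $I$ is the $T_{\mathbb{Z}_3}$-ideal of graded identities of $UT_3(F)^{(-)}$ ($3\times3$ upper triangular matrices, bracket $[a,b]=ab-ba$, canonical grading with degree-$k$ component spanned by $e_{ij}$, $j-i=k$) in the free Lie algebra on variables $y_i$ (degree $0$), $z_i$ (degree $1$), $w_i$ (degree $2$). Commutators are left normed. $\mathcal{B}_{(1,1)}$ is the set of commutators $[z_1,a_1y_1,\dots,a_ny_n,z_2,b_1y_1,\dots,b_ny_n]$ ($z_1$, then $y_i$ repeated $a_i$ times, then $z_2$, then $y_i$ repeated $b_i$ times), with $z_1,z_2$ distinct degree-$1$ variables, $n\ge0$, $a_i,b_i\ge0$. A polynomial of type $(1,1)$ is a multihomogeneous polynomial that is a linear combination of elements of $\mathcal{B}_{(1,1)}$. *)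

theory Defs
  imports Main
begin

datatype var = Y nat | Z nat | W nat

fun vdeg :: "var \<Rightarrow> nat" where
  "vdeg (Y _) = 0" | "vdeg (Z _) = 1" | "vdeg (W _) = 2"

text \<open>Free associative algebra F<X>: noncommutative polynomials, represented as
  coefficient functions on words with finite support. The free Lie algebra is
  realised (Witt) as the Lie subalgebra generated by the variables under the commutator.\<close>
type_synonym 'a fa = "var list \<Rightarrow> 'a"

definition supp :: "'a::zero fa \<Rightarrow> var list set" where
  "supp p = {w. p w \<noteq> 0}"

definition fa_var :: "var \<Rightarrow> 'a::{zero,one} fa" where
  "fa_var x = (\<lambda>w. if w = [x] then 1 else 0)"

definition fa_one :: "'a::{zero,one} fa" where
  "fa_one = (\<lambda>w. if w = [] then 1 else 0)"

definition fa_zero :: "'a::zero fa" where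
  "fa_zero = (\<lambda>w. 0)"

definition fa_add :: "'a::plus fa \<Rightarrow> 'a fa \<Rightarrow> 'a fa" where
  "fa_add p q = (\<lambda>w. p w + q w)"

definition fa_smult :: "'a::times \<Rightarrow> 'a fa \<Rightarrow> 'a fa" where
  "fa_smult c p = (\<lambda>w. c * p w)"

definition fa_mul :: "'a::comm_ring_1 fa \<Rightarrow> 'a fa \<Rightarrow> 'a fa" where
  "fa_mul p q = (\<lambda>w. \<Sum>i\<in>{0..length w}. p (take i w) * q (drop i w))"

definition bracket :: "'a::comm_ring_1 fa \<Rightarrow> 'a fa \<Rightarrow> 'a fa" where
  "bracket p q = (\<lambda>w. fa_mul p q w - fa_mul q p w)"

definition lnc :: "'a::comm_ring_1 fa \<Rightarrow> 'a fa list \<Rightarrow> 'a fa" where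
  "lnc x xs = foldl bracket x xs"

inductive_set lie :: "'a::comm_ring_1 fa set" where
  lie_var: "fa_var x \<in> lie"
| lie_zero: "fa_zero \<in> lie"
| lie_add: "p \<in> lie \<Longrightarrow> q \<in> lie \<Longrightarrow> fa_add p q \<in> lie"
| lie_smult: "p \<in> lie \<Longrightarrow> fa_smult c p \<in> lie"
| lie_bracket: "p \<in> lie \<Longrightarrow> q \<in> lie \<Longrightarrow> bracket p q \<in> lie"

definition wdeg :: "var list \<Rightarrow> nat" where
  "wdeg w = (sum_list (map vdeg w)) mod 3"

definition homogeneous_of :: "nat \<Rightarrow> 'a::zero fa \<Rightarrow> bool" where
  "homogeneous_of k p \<longleftrightarrow> (\<forall>w. p w \<noteq> 0 \<longrightarrow> wdeg w = k)"

definition fa_prod :: "'a::comm_ring_1 fa list \<Rightarrow> 'a fa" where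
  "fa_prod ps = foldr fa_mul ps fa_one"

definition subst :: "(var \<Rightarrow> 'a::comm_ring_1 fa) \<Rightarrow> 'a fa \<Rightarrow> 'a fa" where
  "subst \<sigma> p = (\<lambda>w. \<Sum>u\<in>supp p. p u * fa_prod (map \<sigma> u) w)"

definition graded_endo :: "(var \<Rightarrow> 'a::comm_ring_1 fa) \<Rightarrow> bool" where
  "graded_endo \<sigma> \<longleftrightarrow> (\<forall>x. \<sigma> x \<in> lie \<and> homogeneous_of (vdeg x) (\<sigma> x))"

definition T_ideal :: "'a::comm_ring_1 fa set \<Rightarrow> bool" where
  "T_ideal J \<longleftrightarrow> J \<subseteq> lie \<and> fa_zero \<in> J
     \<and> (\<forall>p\<in>J. \<forall>q\<in>J. fa_add p q \<in> J)
     \<and> (\<forall>c. \<forall>p\<in>J. fa_smult c p \<in> J)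
     \<and> (\<forall>p\<in>J. \<forall>q\<in>lie. bracket p q \<in> J)
     \<and> (\<forall>p\<in>J. \<forall>\<sigma>. graded_endo \<sigma> \<longrightarrow> subst \<sigma> p \<in> J)"

definition T_gen :: "'a::comm_ring_1 fa set \<Rightarrow> 'a fa set" where
  "T_gen S = \<Inter>{J. T_ideal J \<and> S \<subseteq> J}"

text \<open>3x3 matrices (indices 0,1,2), as functions; only entries < 3 are meaningful.\<close>
type_synonym 'a mat = "nat \<Rightarrow> nat \<Rightarrow> 'a"

definition mmul :: "'a::comm_ring_1 mat \<Rightarrow> 'a mat \<Rightarrow> 'a mat" where
  "mmul A B = (\<lambda>i j. \<Sum>k<3. A i k * B k j)"

definition mone :: "'a::comm_ring_1 mat" where
  "mone = (\<lambda>i j. if i = j then 1 else 0)"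

definition mprod :: "'a::comm_ring_1 mat list \<Rightarrow> 'a mat" where
  "mprod As = foldr mmul As mone"

text \<open>Evaluation (associative, hence Lie for commutators) homomorphism into M_3(F).\<close>
definition evalM :: "(var \<Rightarrow> 'a::comm_ring_1 mat) \<Rightarrow> 'a fa \<Rightarrow> 'a mat" where
  "evalM \<phi> p = (\<lambda>i j. \<Sum>u\<in>supp p. p u * mprod (map \<phi> u) i j)"

definition graded_UT3_subst :: "(var \<Rightarrow> 'a::comm_ring_1 mat) \<Rightarrow> bool" where
  "graded_UT3_subst \<phi> \<longleftrightarrow>
     (\<forall>x i j. i < 3 \<longrightarrow> j < 3 \<longrightarrow> \<phi> x i j \<noteq> 0 \<longrightarrow> j = i + vdeg x)"

definition I_UT3 :: "'a::comm_ring_1 fa set" where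
  "I_UT3 = {f \<in> lie. \<forall>\<phi>. graded_UT3_subst \<phi> \<longrightarrow>
               (\<forall>i<3. \<forall>j<3. evalM \<phi> f i j = 0)}"

definition ys_block :: "nat \<Rightarrow> (nat \<Rightarrow> nat) \<Rightarrow> 'a::comm_ring_1 fa list" where
  "ys_block n a = concat (map (\<lambda>i. replicate (a i) (fa_var (Y i))) [1..<n+1])"

definition B11 :: "'a::comm_ring_1 fa set" where
  "B11 = {lnc (fa_var (Z 1)) (ys_block n a @ [fa_var (Z 2)] @ ys_block n b) | n a b. True}"

inductive_set lin_span :: "'a::comm_ring_1 fa set \<Rightarrow> 'a fa set" for B where
  ls_zero: "fa_zero \<in> lin_span B"
| ls_step: "b \<in> B \<Longrightarrow> p \<in> lin_span B \<Longrightarrow> fa_add (fa_smult c b) p \<in> lin_span B"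

definition multihomogeneous :: "'a::zero fa \<Rightarrow> bool" where
  "multihomogeneous p \<longleftrightarrow> (\<exists>m. \<forall>w. p w \<noteq> 0 \<longrightarrow> (\<forall>x. count_list w x = m x))"

definition type11 :: "'a::comm_ring_1 fa \<Rightarrow> bool" where
  "type11 f \<longleftrightarrow> multihomogeneous f \<and> f \<in> lin_span B11"

end

theory Submission
  imports Defs "HOL-Library.Multiset_Order" "HOL-Library.Ramsey" "HOL-Library.Sublist"
    "HOL-Library.Product_Order"
begin

text \<open>Under a graded substitution into \<open>UT\<^sub>3\<close>, the commutator
  \<open>[z\<^sub>1, a\<^sub>1 y\<^sub>1, \<dots>, a\<^sub>n y\<^sub>n, z\<^sub>2, b\<^sub>1 y\<^sub>1, \<dots>, b\<^sub>n y\<^sub>n]\<close> vanishes outside the corner entry,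
  and there it equals \<open>z\<^sub>1\<^sub>,\<^sub>1\<^sub>2 z\<^sub>2\<^sub>,\<^sub>2\<^sub>3 \<Prod> u\<^sub>i\<^bsup>a\<^sub>i\<^esup> w\<^sub>i\<^bsup>b\<^sub>i\<^esup> - z\<^sub>1\<^sub>,\<^sub>2\<^sub>3 z\<^sub>2\<^sub>,\<^sub>1\<^sub>2 \<Prod> v\<^sub>i\<^bsup>a\<^sub>i\<^esup> w\<^sub>i\<^bsup>b\<^sub>i\<^esup>\<close>,
  where \<open>u\<^sub>i, v\<^sub>i, w\<^sub>i = u\<^sub>i + v\<^sub>i\<close> are differences of diagonal entries of \<open>y\<^sub>i\<close>. So modulo \<open>I\<close> a
  polynomial of type \<open>(1,1)\<close> is described by a commutative polynomial in variables \<open>x\<^sub>2\<^sub>k\<close>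
  (for \<open>y\<^sub>k\<close> before \<open>z\<^sub>2\<close>) and \<open>x\<^sub>2\<^sub>k\<^sub>+\<^sub>1\<close> (for \<open>y\<^sub>k\<close> after \<open>z\<^sub>2\<close>). Bracketing with \<open>y\<^sub>k\<close>,
  substituting \<open>z\<^sub>1 \<mapsto> [z\<^sub>1, y\<^sub>k]\<close> and renaming the \<open>y\<^sub>k\<close> monotonically act on these as
  multiplication by \<open>x\<^sub>2\<^sub>k\<^sub>+\<^sub>1\<close>, multiplication by \<open>x\<^sub>2\<^sub>k\<close> and renaming of pairs of variables.
  It therefore suffices that ideals closed under such renamings satisfy the ascending chain
  condition. As for the Hilbert basis theorem this is seen on leading monomials: those of such an
  ideal are upward closed for divisibility up to monotone renaming, and by Higman's lemma (applied
  to the sequence of exponent pairs of a monomial) every infinite sequence of monomials contains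
  a pair in this order.\<close>

section \<open>Almost full relations and Higman's lemma\<close>

definition good :: "('b \<Rightarrow> 'b \<Rightarrow> bool) \<Rightarrow> (nat \<Rightarrow> 'b) \<Rightarrow> bool" where
  "good P f \<longleftrightarrow> (\<exists>i j. i < j \<and> P (f i) (f j))"

definition almost_full :: "('b \<Rightarrow> 'b \<Rightarrow> bool) \<Rightarrow> bool" where
  "almost_full P \<longleftrightarrow> (\<forall>f. good P f)"

lemma almost_full_chain_subseq:
  assumes "almost_full P"
  obtains \<phi> :: "nat \<Rightarrow> nat" where "strict_mono \<phi>" "\<And>i j. i < j \<Longrightarrow> P (f (\<phi> i)) (f (\<phi> j))"
proof -
  define c where "c X = (if P (f (Min X)) (f (Max X)) then 0 else 1 :: nat)" for X
  have "\<forall>x\<in>UNIV. \<forall>y\<in>UNIV. x \<noteq> y \<longrightarrow> c {x, y} < 2" by (simp add: c_def)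
  then obtain Y t where Y: "infinite Y" "t < 2" "\<forall>x\<in>Y. \<forall>y\<in>Y. x \<noteq> y \<longrightarrow> c {x, y} = t"
    using Ramsey2[of "UNIV :: nat set" c 2] by auto
  define \<phi> where "\<phi> = enumerate Y"
  have mono: "strict_mono \<phi>" using Y(1) by (simp add: \<phi>_def strict_mono_enumerate)
  have colour: "c {\<phi> i, \<phi> j} = (if P (f (\<phi> i)) (f (\<phi> j)) then 0 else 1)"
    and homogeneous: "c {\<phi> i, \<phi> j} = t" if "i < j" for i j
  proof -
    have lt: "\<phi> i < \<phi> j" using mono that by (simp add: strict_mono_less)
    then show "c {\<phi> i, \<phi> j} = (if P (f (\<phi> i)) (f (\<phi> j)) then 0 else 1)"
      by (simp add: c_def)
    have "\<phi> i \<in> Y" "\<phi> j \<in> Y" using Y(1) by (simp_all add: \<phi>_def enumerate_in_set)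
    then show "c {\<phi> i, \<phi> j} = t" using Y(3) lt by (metis order.irrefl)
  qed
  have "good P (f \<circ> \<phi>)" using assms by (simp add: almost_full_def)
  then obtain i j where "i < j" "P (f (\<phi> i)) (f (\<phi> j))" by (auto simp: good_def)
  then have "t = 0" using colour[of i j] homogeneous[of i j] by simp
  show thesis
  proof (rule that[OF mono])
    fix i j :: nat assume "i < j"
    then show "P (f (\<phi> i)) (f (\<phi> j))"
      using colour[of i j] homogeneous[of i j] \<open>t = 0\<close> by (simp split: if_splits)
  qed
qed

lemma almost_full_le_nat: "almost_full ((\<le>) :: nat \<Rightarrow> nat \<Rightarrow> bool)"
  unfolding almost_full_def good_def
proof
  fix f :: "nat \<Rightarrow> nat"
  obtain i where "\<forall>k. f i \<le> f k"
    using ex_has_least_nat[of "\<lambda>_. True" 0 f] by auto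
  then show "\<exists>i j. i < j \<and> f i \<le> f j" by (intro exI[of _ i] exI[of _ "Suc i"]) auto
qed

lemma almost_full_prod:
  fixes P :: "'c \<Rightarrow> 'c \<Rightarrow> bool" and Q :: "'d \<Rightarrow> 'd \<Rightarrow> bool"
  assumes "almost_full P" "almost_full Q"
  shows "almost_full (\<lambda>x y. P (fst x) (fst y) \<and> Q (snd x) (snd y))"
  unfolding almost_full_def good_def
proof
  fix f :: "nat \<Rightarrow> 'c \<times> 'd"
  obtain \<phi> :: "nat \<Rightarrow> nat" where \<phi>: "strict_mono \<phi>" "\<And>i j. i < j \<Longrightarrow> P (fst (f (\<phi> i))) (fst (f (\<phi> j)))"
    using almost_full_chain_subseq[OF assms(1), of "fst \<circ> f"] by (metis comp_apply)
  have "good Q (snd \<circ> f \<circ> \<phi>)" using assms(2) by (simp add: almost_full_def)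
  then obtain i j where "i < j" "Q (snd (f (\<phi> i))) (snd (f (\<phi> j)))" by (auto simp: good_def)
  then show "\<exists>i j. i < j \<and> P (fst (f i)) (fst (f j)) \<and> Q (snd (f i)) (snd (f j))"
    using \<phi> by (intro exI[of _ "\<phi> i"] exI[of _ "\<phi> j"]) (auto simp: strict_mono_less)
qed

primrec greedy_prefix :: "('b list \<Rightarrow> 'b) \<Rightarrow> nat \<Rightarrow> 'b list" where
  "greedy_prefix next 0 = []"
| "greedy_prefix next (Suc n) = greedy_prefix next n @ [next (greedy_prefix next n)]"

lemma length_greedy_prefix [simp]: "length (greedy_prefix next n) = n"
  by (induction n) auto

lemma greedy_prefix_eq_map: "greedy_prefix next n = map (\<lambda>k. next (greedy_prefix next k)) [0..<n]"
  by (induction n) auto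

context
  fixes P :: "'b \<Rightarrow> 'b \<Rightarrow> bool"
  assumes almost_full_P: "almost_full P"
begin

definition bad_seqs :: "(nat \<Rightarrow> 'b list) set" where
  "bad_seqs = {f. \<not> good (list_emb P) f}"

definition extends :: "'b list list \<Rightarrow> (nat \<Rightarrow> 'b list) \<Rightarrow> bool" where
  "extends p g \<longleftrightarrow> (\<forall>k<length p. g k = p ! k)"

text \<open>Nash-Williams' minimal bad sequence: each entry is a shortest continuation of the entries
  chosen before to a bad sequence.\<close>

definition shortest_bad_next :: "'b list list \<Rightarrow> 'b list" where
  "shortest_bad_next p = (SOME x. \<exists>g\<in>bad_seqs. extends p g \<and> g (length p) = x \<and>
      (\<forall>g'\<in>bad_seqs. extends p g' \<longrightarrow> length x \<le> length (g' (length p))))"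

definition min_bad :: "nat \<Rightarrow> 'b list" where
  "min_bad n = shortest_bad_next (greedy_prefix shortest_bad_next n)"

lemma shortest_bad_next:
  assumes "g \<in> bad_seqs" "extends p g"
  shows "\<exists>g\<in>bad_seqs. extends p g \<and> g (length p) = shortest_bad_next p \<and>
      (\<forall>g'\<in>bad_seqs. extends p g' \<longrightarrow> length (shortest_bad_next p) \<le> length (g' (length p)))"
proof -
  define L where "L = (LEAST l. \<exists>g\<in>bad_seqs. extends p g \<and> length (g (length p)) = l)"
  have "\<exists>g\<in>bad_seqs. extends p g \<and> length (g (length p)) = L"
    unfolding L_def by (rule LeastI[of _ "length (g (length p))"]) (use assms in auto)
  then obtain g0 where "g0 \<in> bad_seqs" "extends p g0" "length (g0 (length p)) = L" by auto
  moreover have "\<forall>g'\<in>bad_seqs. extends p g' \<longrightarrow> L \<le> length (g' (length p))"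
    unfolding L_def by (auto intro: Least_le)
  ultimately have "\<exists>x. \<exists>g\<in>bad_seqs. extends p g \<and> g (length p) = x \<and>
      (\<forall>g'\<in>bad_seqs. extends p g' \<longrightarrow> length x \<le> length (g' (length p)))"
    by (intro exI[of _ "g0 (length p)"]) auto
  then show ?thesis unfolding shortest_bad_next_def by (rule someI_ex)
qed

lemma greedy_prefix_min_bad: "greedy_prefix shortest_bad_next n = map min_bad [0..<n]"
  unfolding min_bad_def by (rule greedy_prefix_eq_map)

lemma min_bad_minimal:
  assumes "bad_seqs \<noteq> {}"
  shows "\<exists>g\<in>bad_seqs. \<forall>k\<le>n. g k = min_bad k"
    and "\<And>g. g \<in> bad_seqs \<Longrightarrow> \<forall>k<n. g k = min_bad k \<Longrightarrow> length (min_bad n) \<le> length (g n)"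
proof -
  have extends_iff: "extends (greedy_prefix shortest_bad_next m) g \<longleftrightarrow> (\<forall>k<m. g k = min_bad k)"
    for m g by (simp add: extends_def greedy_prefix_min_bad)
  have "\<exists>g\<in>bad_seqs. \<forall>k\<le>n. g k = min_bad k"
  proof (induction n)
    case 0
    obtain g where "g \<in> bad_seqs" using assms by blast
    from shortest_bad_next[OF this, of "[]"] show ?case by (auto simp: extends_def min_bad_def)
  next
    case (Suc n)
    then obtain g where "g \<in> bad_seqs" "extends (greedy_prefix shortest_bad_next (Suc n)) g"
      by (auto simp: extends_iff less_Suc_eq_le simp del: greedy_prefix.simps)
    from shortest_bad_next[OF this] obtain g' where "g' \<in> bad_seqs"
      "\<forall>k<Suc n. g' k = min_bad k" "g' (Suc n) = min_bad (Suc n)"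
      by (auto simp: extends_iff min_bad_def simp del: greedy_prefix.simps)
    then show ?case by (metis le_neq_implies_less)
  qed
  then show "\<exists>g\<in>bad_seqs. \<forall>k\<le>n. g k = min_bad k" .
  fix g assume "g \<in> bad_seqs" "\<forall>k<n. g k = min_bad k"
  with shortest_bad_next[of g "greedy_prefix shortest_bad_next n"]
  show "length (min_bad n) \<le> length (g n)" by (auto simp: extends_iff min_bad_def)
qed

lemma min_bad_bad:
  assumes "bad_seqs \<noteq> {}" "i < j"
  shows "\<not> list_emb P (min_bad i) (min_bad j)"
proof -
  obtain g where g: "g \<in> bad_seqs" "\<forall>k\<le>j. g k = min_bad k"
    using min_bad_minimal(1)[OF assms(1)] by blast
  then have "\<not> list_emb P (g i) (g j)" using assms(2) unfolding bad_seqs_def good_def by blast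
  moreover have "g i = min_bad i" "g j = min_bad j" using g(2) assms(2) by auto
  ultimately show ?thesis by simp
qed

theorem almost_full_list_emb: "almost_full (list_emb P)"
proof (rule ccontr)
  assume "\<not> almost_full (list_emb P)"
  then have nonempty: "bad_seqs \<noteq> {}" by (auto simp: almost_full_def bad_seqs_def)
  have "min_bad n \<noteq> []" for n
    using min_bad_bad[OF nonempty, of n "Suc n"] by auto
  define a where "a n = hd (min_bad n)" for n
  define t where "t n = tl (min_bad n)" for n
  have at: "min_bad n = a n # t n" for n
    using \<open>min_bad n \<noteq> []\<close> by (simp add: a_def t_def)
  obtain \<phi> :: "nat \<Rightarrow> nat"
    where \<phi>: "strict_mono \<phi>" "\<And>i j. i < j \<Longrightarrow> P (a (\<phi> i)) (a (\<phi> j))"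
    using almost_full_chain_subseq[OF almost_full_P, of a] by blast
  \<comment> \<open>Replacing the tails of min_bad from position \<open>\<phi> 0\<close> on by the tails
      \<open>t (\<phi> _)\<close> keeps the sequence bad but shortens its entry at \<open>\<phi> 0\<close>.\<close>
  define g where "g k = (if k < \<phi> 0 then min_bad k else t (\<phi> (k - \<phi> 0)))" for k
  have \<phi>_ge: "\<phi> 0 \<le> \<phi> k" for k using \<phi>(1) by (simp add: strict_mono_less_eq)
  have "g \<in> bad_seqs"
    unfolding bad_seqs_def good_def
  proof clarify
    fix i j assume ij: "i < j" and emb: "list_emb P (g i) (g j)"
    consider "j < \<phi> 0" | "i < \<phi> 0" "\<phi> 0 \<le> j" | "\<phi> 0 \<le> i" by linarith
    then show False
    proof cases
      case 1
      then show False using emb ij min_bad_bad[OF nonempty ij] by (simp add: g_def)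
    next
      case 2
      then have "list_emb P (min_bad i) (t (\<phi> (j - \<phi> 0)))"
        using emb by (simp add: g_def)
      then have "list_emb P (min_bad i) (min_bad (\<phi> (j - \<phi> 0)))"
        unfolding at[of "\<phi> _"] by (rule list_emb_Cons)
      moreover have "i < \<phi> (j - \<phi> 0)" using 2 \<phi>_ge[of "j - \<phi> 0"] by simp
      ultimately show False using min_bad_bad[OF nonempty] by blast
    next
      case 3
      then have "list_emb P (t (\<phi> (i - \<phi> 0))) (t (\<phi> (j - \<phi> 0)))"
        using emb ij by (simp add: g_def)
      with \<phi>(2) have "list_emb P (min_bad (\<phi> (i - \<phi> 0))) (min_bad (\<phi> (j - \<phi> 0)))"
        unfolding at[of "\<phi> _"] using 3 ij by (intro list_emb_Cons2) auto
      moreover have "\<phi> (i - \<phi> 0) < \<phi> (j - \<phi> 0)"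
        using 3 ij \<phi>(1) by (simp add: strict_mono_less)
      ultimately show False using min_bad_bad[OF nonempty] by blast
    qed
  qed
  then have "length (min_bad (\<phi> 0)) \<le> length (g (\<phi> 0))"
    by (rule min_bad_minimal(2)[OF nonempty]) (simp add: g_def)
  then show False by (simp add: g_def at)
qed

end

lemma list_emb_strict_mono_index:
  assumes "list_emb P xs ys"
  obtains \<psi> :: "nat \<Rightarrow> nat"
  where "strict_mono \<psi>" "\<And>i. i < length xs \<Longrightarrow> \<psi> i < length ys \<and> P (xs ! i) (ys ! \<psi> i)"
proof -
  have "\<exists>\<psi> :: nat \<Rightarrow> nat. strict_mono \<psi> \<and>
      (\<forall>i<length xs. \<psi> i < length ys \<and> P (xs ! i) (ys ! \<psi> i))"
    using assms
  proof (induction rule: list_emb.induct)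
    case (list_emb_Nil ys)
    show ?case by (intro exI[of _ id]) (simp add: strict_mono_def)
  next
    case (list_emb_Cons xs ys y)
    then obtain \<psi> :: "nat \<Rightarrow> nat" where
      "strict_mono \<psi>" "\<forall>i<length xs. \<psi> i < length ys \<and> P (xs ! i) (ys ! \<psi> i)" by blast
    then show ?case by (intro exI[of _ "Suc \<circ> \<psi>"]) (auto simp: strict_mono_def)
  next
    case (list_emb_Cons2 x y xs ys)
    then obtain \<psi> :: "nat \<Rightarrow> nat" where \<psi>:
      "strict_mono \<psi>" "\<forall>i<length xs. \<psi> i < length ys \<and> P (xs ! i) (ys ! \<psi> i)" by blast
    define \<psi>' where "\<psi>' i = (case i of 0 \<Rightarrow> 0 | Suc k \<Rightarrow> Suc (\<psi> k))" for i
    have "strict_mono \<psi>'"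
      unfolding strict_mono_def
    proof (intro allI impI)
      fix a b :: nat assume "a < b"
      then show "\<psi>' a < \<psi>' b" using \<psi>(1) by (cases a; cases b) (auto simp: \<psi>'_def strict_mono_less)
    qed
    moreover have "\<psi>' i < length (y # ys) \<and> P ((x # xs) ! i) ((y # ys) ! \<psi>' i)"
      if "i < length (x # xs)" for i
      using that \<psi>(2) list_emb_Cons2.hyps(1) by (cases i) (auto simp: \<psi>'_def)
    ultimately show ?case by blast
  qed
  then show thesis using that by blast
qed

section \<open>Divisibility of monomials up to monotone renaming\<close>

text \<open>Monomials in commuting variables \<open>x\<^sub>0, x\<^sub>1, \<dots>\<close> are multisets of indices.
  The variables come in pairs \<open>x\<^sub>2\<^sub>k, x\<^sub>2\<^sub>k\<^sub>+\<^sub>1\<close>, and a renaming \<open>\<rho>\<close> moves the \<open>k\<close>-th pair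
  to the \<open>\<rho> k\<close>-th one.\<close>

definition pair_ren :: "(nat \<Rightarrow> nat) \<Rightarrow> nat \<Rightarrow> nat" where
  "pair_ren \<rho> c = 2 * \<rho> (c div 2) + c mod 2"

definition mon_ren :: "(nat \<Rightarrow> nat) \<Rightarrow> nat multiset \<Rightarrow> nat multiset" where
  "mon_ren \<rho> m = image_mset (pair_ren \<rho>) m"

definition ren_dvd :: "nat multiset \<Rightarrow> nat multiset \<Rightarrow> bool" where
  "ren_dvd m m' \<longleftrightarrow> (\<exists>\<rho>. strict_mono \<rho> \<and> mon_ren \<rho> m \<subseteq># m')"

lemma strict_mono_pair_ren:
  assumes "strict_mono \<rho>"
  shows "strict_mono (pair_ren \<rho>)"
  unfolding strict_mono_def
proof (intro allI impI)
  fix c d :: nat assume "c < d"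
  show "pair_ren \<rho> c < pair_ren \<rho> d"
  proof (cases "c div 2 = d div 2")
    case True
    then have "c mod 2 < d mod 2" using \<open>c < d\<close> by (metis div_mod_decomp add_less_cancel_left mult.commute)
    then show ?thesis using True by (simp add: pair_ren_def)
  next
    case False
    then have "c div 2 < d div 2" using \<open>c < d\<close> by (meson div_le_mono le_less not_le)
    then have "\<rho> (c div 2) < \<rho> (d div 2)" using assms by (simp add: strict_mono_less)
    then show ?thesis by (simp add: pair_ren_def)
  qed
qed

lemma strict_mono_mon_ren:
  assumes "strict_mono \<rho>"
  shows "strict_mono (mon_ren \<rho>)"
  using strict_mono_pair_ren[OF assms]
  by (auto simp: strict_mono_def mon_ren_def intro: image_mset_strict_mono)

lemma count_image_mset_inj:
  assumes "inj f"
  shows "count (image_mset f M) (f c) = count M c"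
proof -
  have "f -` {f c} \<inter> set_mset M = {c} \<inter> set_mset M" using assms by (auto dest: injD)
  then show ?thesis by (cases "c \<in># M") (auto simp: count_image_mset not_in_iff)
qed

definition pair_counts :: "nat multiset \<Rightarrow> (nat \<times> nat) list" where
  "pair_counts m = map (\<lambda>k. (count m (2 * k), count m (2 * k + 1))) [0..<Suc (Max (insert 0 (set_mset m)))]"

lemma list_emb_pair_counts_imp_ren_dvd:
  assumes "list_emb (\<le>) (pair_counts m) (pair_counts m')"
  shows "ren_dvd m m'"
proof -
  obtain \<psi> where \<psi>: "strict_mono \<psi>"
    "\<And>k. k < length (pair_counts m) \<Longrightarrow>
       \<psi> k < length (pair_counts m') \<and> pair_counts m ! k \<le> pair_counts m' ! \<psi> k"
    using list_emb_strict_mono_index[OF assms] by blast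
  have inj: "inj (pair_ren \<psi>)" using strict_mono_pair_ren[OF \<psi>(1)] strict_mono_imp_inj_on by blast
  have "count (mon_ren \<psi> m) y \<le> count m' y" for y
  proof (cases "y \<in> pair_ren \<psi> ` set_mset m")
    case False
    then have "pair_ren \<psi> -` {y} \<inter> set_mset m = {}" by blast
    then show ?thesis by (simp add: mon_ren_def count_image_mset)
  next
    case True
    then obtain c where y: "y = pair_ren \<psi> c" and c: "c \<in># m" by blast
    define k where "k = c div 2"
    have "c \<le> Max (insert 0 (set_mset m))" using c by simp
    then have k: "k < length (pair_counts m)" by (simp add: pair_counts_def k_def)
    with \<psi>(2)[OF k] have "count m (2 * k) \<le> count m' (2 * \<psi> k)"
      "count m (2 * k + 1) \<le> count m' (2 * \<psi> k + 1)"
      by (auto simp: pair_counts_def less_eq_prod_def simp del: upt_Suc)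
    moreover have "c = 2 * k + c mod 2" "y = 2 * \<psi> k + c mod 2"
      by (simp_all add: k_def y pair_ren_def)
    moreover have "c mod 2 = 0 \<or> c mod 2 = 1" by auto
    moreover have "count (mon_ren \<psi> m) y = count m c"
      using inj by (simp add: mon_ren_def y count_image_mset_inj)
    ultimately show ?thesis by (metis add.right_neutral)
  qed
  then show ?thesis unfolding ren_dvd_def using \<psi>(1) by (auto simp: subseteq_mset_def)
qed

theorem almost_full_ren_dvd: "almost_full ren_dvd"
  unfolding almost_full_def good_def
proof
  fix m :: "nat \<Rightarrow> nat multiset"
  have "almost_full ((\<le>) :: nat \<times> nat \<Rightarrow> _)"
    using almost_full_prod[OF almost_full_le_nat almost_full_le_nat]
    by (simp add: less_eq_prod_def[abs_def])
  then have "almost_full (list_emb ((\<le>) :: nat \<times> nat \<Rightarrow> _))"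
    by (rule almost_full_list_emb)
  then have "good (list_emb (\<le>)) (pair_counts \<circ> m)"
    by (simp add: almost_full_def)
  then show "\<exists>i j. i < j \<and> ren_dvd (m i) (m j)"
    by (auto simp: good_def intro: list_emb_pair_counts_imp_ren_dvd)
qed

section \<open>Ideals of commutative polynomials closed under monotone renaming\<close>

type_synonym 'a cpoly = "nat multiset \<Rightarrow> 'a"

definition cp_supp :: "'a::zero cpoly \<Rightarrow> nat multiset set" where
  "cp_supp h = {m. h m \<noteq> 0}"

definition cp_zero :: "'a::zero cpoly" where
  "cp_zero = (\<lambda>_. 0)"

definition cp_add :: "'a::plus cpoly \<Rightarrow> 'a cpoly \<Rightarrow> 'a cpoly" where
  "cp_add p q = (\<lambda>m. p m + q m)"

definition cp_smult :: "'a::times \<Rightarrow> 'a cpoly \<Rightarrow> 'a cpoly" where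
  "cp_smult c p = (\<lambda>m. c * p m)"

definition cp_mult_var :: "nat \<Rightarrow> 'a::zero cpoly \<Rightarrow> 'a cpoly" where
  "cp_mult_var x h = (\<lambda>m. if x \<in># m then h (m - {#x#}) else 0)"

definition cp_rename :: "(nat \<Rightarrow> nat) \<Rightarrow> 'a::comm_monoid_add cpoly \<Rightarrow> 'a cpoly" where
  "cp_rename \<rho> h = (\<lambda>m. \<Sum>m'\<in>{m' \<in> cp_supp h. mon_ren \<rho> m' = m}. h m')"

inductive_set ren_ideal :: "'a::field cpoly set \<Rightarrow> 'a cpoly set" for S where
  generator: "g \<in> S \<Longrightarrow> g \<in> ren_ideal S"
| zero: "cp_zero \<in> ren_ideal S"
| add: "p \<in> ren_ideal S \<Longrightarrow> q \<in> ren_ideal S \<Longrightarrow> cp_add p q \<in> ren_ideal S"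
| smult: "p \<in> ren_ideal S \<Longrightarrow> cp_smult c p \<in> ren_ideal S"
| mult_var: "p \<in> ren_ideal S \<Longrightarrow> cp_mult_var x p \<in> ren_ideal S"
| rename: "p \<in> ren_ideal S \<Longrightarrow> strict_mono \<rho> \<Longrightarrow> cp_rename \<rho> p \<in> ren_ideal S"

lemma ren_ideal_mono:
  assumes "S \<subseteq> T"
  shows "ren_ideal S \<subseteq> ren_ideal T"
proof
  fix p assume "p \<in> ren_ideal S"
  then show "p \<in> ren_ideal T" by induction (use assms in \<open>auto intro: ren_ideal.intros\<close>)
qed

lemma cp_supp_eq_empty_iff: "cp_supp h = {} \<longleftrightarrow> h = cp_zero"
  by (auto simp: cp_supp_def cp_zero_def)

lemma cp_supp_add: "cp_supp (cp_add p q) \<subseteq> cp_supp p \<union> cp_supp (q :: 'a::monoid_add cpoly)"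
  by (auto simp: cp_supp_def cp_add_def)

lemma cp_supp_smult: "cp_supp (cp_smult c p) \<subseteq> cp_supp (p :: 'a::mult_zero cpoly)"
  by (auto simp: cp_supp_def cp_smult_def)

lemma cp_supp_mult_var: "cp_supp (cp_mult_var x h) = add_mset x ` cp_supp h"
proof (intro set_eqI iffI)
  fix m assume "m \<in> cp_supp (cp_mult_var x h)"
  then have "x \<in># m" "h (m - {#x#}) \<noteq> 0" by (auto simp: cp_supp_def cp_mult_var_def split: if_splits)
  then show "m \<in> add_mset x ` cp_supp h"
    by (intro image_eqI[of _ _ "m - {#x#}"]) (auto simp: cp_supp_def)
qed (auto simp: cp_supp_def cp_mult_var_def)

lemma cp_rename_mon_ren:
  assumes "strict_mono \<rho>"
  shows "cp_rename \<rho> h (mon_ren \<rho> m) = h m"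
proof -
  have "mon_ren \<rho> m' = mon_ren \<rho> m \<longleftrightarrow> m' = m" for m'
    using strict_mono_mon_ren[OF assms] by (meson strict_mono_eq)
  then have "{m' \<in> cp_supp h. mon_ren \<rho> m' = mon_ren \<rho> m} = (if h m = 0 then {} else {m})"
    by (auto simp: cp_supp_def)
  then show ?thesis unfolding cp_rename_def by simp
qed

lemma cp_supp_rename:
  assumes "strict_mono \<rho>"
  shows "cp_supp (cp_rename \<rho> h) = mon_ren \<rho> ` cp_supp h"
proof (intro set_eqI iffI)
  fix m assume m: "m \<in> cp_supp (cp_rename \<rho> h)"
  show "m \<in> mon_ren \<rho> ` cp_supp h"
  proof (rule ccontr)
    assume "m \<notin> mon_ren \<rho> ` cp_supp h"
    then have "{m' \<in> cp_supp h. mon_ren \<rho> m' = m} = {}" by blast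
    then have "cp_rename \<rho> h m = 0" unfolding cp_rename_def by (simp only: sum.empty)
    then show False using m unfolding cp_supp_def by simp
  qed
qed (auto simp: cp_supp_def cp_rename_mon_ren[OF assms])

lemma finite_cp_supp_ren_ideal:
  assumes "\<forall>g\<in>S. finite (cp_supp g)" "p \<in> ren_ideal S"
  shows "finite (cp_supp p)"
  using assms(2)
proof (induction p rule: ren_ideal.induct)
  case zero
  then show ?case by (simp add: cp_supp_def cp_zero_def)
next
  case (add p q)
  then show ?case using cp_supp_add finite_subset by blast
next
  case (smult p c)
  then show ?case using cp_supp_smult finite_subset by blast
qed (use assms(1) in \<open>auto simp: cp_supp_mult_var cp_supp_rename\<close>)

definition lead_mon :: "'a::zero cpoly \<Rightarrow> nat multiset" where
  "lead_mon h = Max (cp_supp h)"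

definition lead_mons :: "'a::zero cpoly set \<Rightarrow> nat multiset set" where
  "lead_mons G = {lead_mon h | h. h \<in> G \<and> cp_supp h \<noteq> {}}"

lemma lead_mon_in_lead_mons: "h \<in> G \<Longrightarrow> cp_supp h \<noteq> {} \<Longrightarrow> lead_mon h \<in> lead_mons G"
  unfolding lead_mons_def by blast

lemma lead_monsE:
  assumes "x \<in> lead_mons G"
  obtains h where "h \<in> G" "cp_supp h \<noteq> {}" "lead_mon h = x"
  using assms unfolding lead_mons_def by blast

lemma lead_mon_mult_var:
  assumes "finite (cp_supp h)" "cp_supp h \<noteq> {}"
  shows "lead_mon (cp_mult_var x h) = add_mset x (lead_mon h)"
proof -
  have "mono (add_mset x :: nat multiset \<Rightarrow> _)"
    by (rule monoI) (metis add_mset_add_single add_left_mono add.commute)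
  then show ?thesis using assms by (simp add: lead_mon_def cp_supp_mult_var mono_Max_commute)
qed

lemma lead_mon_rename:
  assumes "strict_mono \<rho>" "finite (cp_supp h)" "cp_supp h \<noteq> {}"
  shows "lead_mon (cp_rename \<rho> h) = mon_ren \<rho> (lead_mon h)"
  using assms strict_mono_mon_ren[OF assms(1)]
  by (simp add: lead_mon_def cp_supp_rename strict_mono_mono mono_Max_commute)

lemma lead_mons_ren_dvd_closed:
  assumes fin: "\<forall>g\<in>S. finite (cp_supp g)"
    and x: "x \<in> lead_mons (ren_ideal S)" and dvd: "ren_dvd x y"
  shows "y \<in> lead_mons (ren_ideal S)"
proof -
  obtain \<rho> where \<rho>: "strict_mono \<rho>" "mon_ren \<rho> x \<subseteq># y" using dvd by (auto simp: ren_dvd_def)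
  have mult_closed: "z + D \<in> lead_mons (ren_ideal S)" if "z \<in> lead_mons (ren_ideal S)" for z D
  proof (induction D)
    case empty
    then show ?case using that by simp
  next
    case (add a D)
    then obtain k where k: "k \<in> ren_ideal S" "cp_supp k \<noteq> {}" "lead_mon k = z + D"
      by (rule lead_monsE)
    have "finite (cp_supp k)" using finite_cp_supp_ren_ideal[OF fin k(1)] .
    then have "lead_mon (cp_mult_var a k) = add_mset a (z + D)"
      using lead_mon_mult_var[OF _ k(2)] k(3) by simp
    moreover have "cp_supp (cp_mult_var a k) \<noteq> {}" using k(2) by (simp add: cp_supp_mult_var)
    moreover have "cp_mult_var a k \<in> ren_ideal S" using k(1) by (rule ren_ideal.mult_var)
    ultimately show ?case using lead_mon_in_lead_mons by fastforce
  qed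
  obtain h where h: "h \<in> ren_ideal S" "cp_supp h \<noteq> {}" "lead_mon h = x"
    using x by (rule lead_monsE)
  have "finite (cp_supp h)" using finite_cp_supp_ren_ideal[OF fin h(1)] .
  then have "mon_ren \<rho> x \<in> lead_mons (ren_ideal S)"
    using lead_mon_in_lead_mons[OF ren_ideal.rename[OF h(1) \<rho>(1)]] h(2,3)
    by (simp add: lead_mon_rename[OF \<rho>(1)] cp_supp_rename[OF \<rho>(1)])
  from mult_closed[OF this, of "y - mon_ren \<rho> x"] show ?thesis
    using \<rho>(2) by (simp add: subset_mset.add_diff_inverse)
qed

lemma lead_mon_cancel:
  fixes h h' :: "'a::field cpoly"
  assumes fin: "finite (cp_supp h)" "finite (cp_supp h')"
    and nonzero: "cp_supp h \<noteq> {}" "cp_supp h' \<noteq> {}"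
    and same: "lead_mon h' = lead_mon h"
  defines "r \<equiv> cp_add h (cp_smult (- (h (lead_mon h) / h' (lead_mon h))) h')"
  shows "r = cp_zero \<or> lead_mon r < lead_mon h"
proof (cases "cp_supp r = {}")
  case False
  define M where "M = lead_mon h"
  have "M \<in> cp_supp h'" using Max_in[OF fin(2) nonzero(2)] same by (simp add: lead_mon_def M_def)
  then have "r M = 0" by (simp add: r_def M_def cp_add_def cp_smult_def cp_supp_def)
  have supp_r: "cp_supp r \<subseteq> cp_supp h \<union> cp_supp h'"
    unfolding r_def using cp_supp_add cp_supp_smult by blast
  have "m < M" if "m \<in> cp_supp r" for m
  proof -
    have "m \<le> M"
      using supp_r that Max_ge[OF fin(1)] Max_ge[OF fin(2)] same
      by (auto simp: lead_mon_def M_def)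
    moreover have "m \<noteq> M" using that \<open>r M = 0\<close> by (auto simp: cp_supp_def)
    ultimately show ?thesis by simp
  qed
  moreover have "finite (cp_supp r)" using fin supp_r finite_subset by blast
  ultimately show ?thesis using Max_in[OF _ False] by (simp add: lead_mon_def M_def)
qed (simp add: cp_supp_eq_empty_iff)

lemma ren_ideal_subset_if_lead_mons_subset:
  assumes fin: "\<forall>g\<in>T. finite (cp_supp g)" and "S \<subseteq> T"
    and lead: "lead_mons (ren_ideal T) \<subseteq> lead_mons (ren_ideal S)"
  shows "ren_ideal T \<subseteq> ren_ideal S"
proof -
  have fin_S: "\<forall>g\<in>S. finite (cp_supp g)" using fin \<open>S \<subseteq> T\<close> by auto
  have "h \<in> ren_ideal S" if "h \<in> ren_ideal T" "cp_supp h \<noteq> {}" for h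
    using that
  proof (induction "lead_mon h" arbitrary: h rule: less_induct)
    case less
    have "lead_mon h \<in> lead_mons (ren_ideal S)" using lead lead_mon_in_lead_mons[OF less.prems] by blast
    then obtain h' where h': "h' \<in> ren_ideal S" "cp_supp h' \<noteq> {}" "lead_mon h' = lead_mon h"
      by (rule lead_monsE)
    define c where "c = h (lead_mon h) / h' (lead_mon h)"
    define r where "r = cp_add h (cp_smult (- c) h')"
    have "r \<in> ren_ideal T"
      using less.prems(1) ren_ideal_mono[OF \<open>S \<subseteq> T\<close>] h'(1) by (auto simp: r_def intro: ren_ideal.intros)
    moreover have "r = cp_zero \<or> lead_mon r < lead_mon h"
      unfolding r_def c_def using finite_cp_supp_ren_ideal fin fin_S less.prems h'
      by (intro lead_mon_cancel) auto
    ultimately have "r \<in> ren_ideal S"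
      using less.hyps by (auto simp: cp_supp_eq_empty_iff intro: ren_ideal.zero)
    moreover have "h = cp_add r (cp_smult c h')" by (auto simp: r_def cp_add_def cp_smult_def)
    ultimately show ?case using h'(1) by (metis ren_ideal.add ren_ideal.smult)
  qed
  then show ?thesis by (auto simp: cp_supp_eq_empty_iff intro: ren_ideal.zero)
qed

text \<open>Otherwise every step of the chain adds a leading monomial that lies above no earlier one
  for \<open>ren_dvd\<close>, contradicting \<open>almost_full_ren_dvd\<close>.\<close>

theorem ex_mem_ren_ideal_predecessors:
  fixes g :: "nat \<Rightarrow> 'a::field cpoly"
  assumes fin: "\<And>i. finite (cp_supp (g i))"
  shows "\<exists>i\<ge>2. g i \<in> ren_ideal {g j | j. 1 \<le> j \<and> j < i}"
proof (rule ccontr)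
  assume new: "\<not> ?thesis"
  define G where "G i = ren_ideal {g j | j. 1 \<le> j \<and> j < i}" for i
  have fin_gens: "\<forall>x\<in>{g j | j. 1 \<le> j \<and> j < i}. finite (cp_supp x)" for i using fin by auto
  have mono: "i \<le> k \<Longrightarrow> G i \<subseteq> G k" for i k unfolding G_def by (rule ren_ideal_mono) auto
  have "\<exists>x. x \<in> lead_mons (G (Suc i)) \<and> x \<notin> lead_mons (G i)" if "i \<ge> 2" for i
  proof (rule ccontr)
    assume "\<nexists>x. x \<in> lead_mons (G (Suc i)) \<and> x \<notin> lead_mons (G i)"
    then have "G (Suc i) \<subseteq> G i"
      unfolding G_def by (intro ren_ideal_subset_if_lead_mons_subset[OF fin_gens]) auto
    moreover have "g i \<in> G (Suc i)" using that by (auto simp: G_def intro!: ren_ideal.generator)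
    ultimately show False using new that by (auto simp: G_def)
  qed
  then obtain x where x: "\<And>i. i \<ge> 2 \<Longrightarrow> x i \<in> lead_mons (G (Suc i)) \<and> x i \<notin> lead_mons (G i)"
    by metis
  have "good ren_dvd (\<lambda>n. x (n + 2))" using almost_full_ren_dvd by (simp add: almost_full_def)
  then obtain n n' where "n < n'" and dvd: "ren_dvd (x (n + 2)) (x (n' + 2))" by (auto simp: good_def)
  then have "lead_mons (G (Suc (n + 2))) \<subseteq> lead_mons (G (n' + 2))"
    using mono[of "Suc (n + 2)" "n' + 2"] by (auto simp: lead_mons_def)
  then have "x (n + 2) \<in> lead_mons (G (n' + 2))" using x[of "n + 2"] by auto
  then have "x (n' + 2) \<in> lead_mons (G (n' + 2))"
    using lead_mons_ren_dvd_closed[OF fin_gens _ dvd] unfolding G_def by blast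
  then show False using x[of "n' + 2"] by simp
qed

section \<open>Evaluation of noncommutative polynomials in \<open>3 \<times> 3\<close> matrices\<close>

lemma supp_fa_mul: "supp (fa_mul p q) \<subseteq> (\<lambda>(u, v). u @ v) ` (supp p \<times> supp q)"
proof
  fix w assume "w \<in> supp (fa_mul p q)"
  then have "(\<Sum>i\<in>{0..length w}. p (take i w) * q (drop i w)) \<noteq> 0"
    by (simp add: supp_def fa_mul_def)
  then obtain i where "p (take i w) * q (drop i w) \<noteq> 0"
    by (metis (no_types, lifting) sum.neutral)
  then have "take i w \<in> supp p" "drop i w \<in> supp q" by (auto simp: supp_def)
  then show "w \<in> (\<lambda>(u, v). u @ v) ` (supp p \<times> supp q)"
    by (intro image_eqI[of _ _ "(take i w, drop i w)"]) auto
qed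

lemma finite_supp_fa_mul: "finite (supp p) \<Longrightarrow> finite (supp q) \<Longrightarrow> finite (supp (fa_mul p q))"
  by (rule finite_subset[OF supp_fa_mul]) auto

lemma supp_fa_add: "supp (fa_add p q) \<subseteq> supp p \<union> supp (q :: 'a::monoid_add fa)"
  by (auto simp: supp_def fa_add_def)

lemma supp_fa_smult: "supp (fa_smult c p) \<subseteq> supp (p :: 'a::mult_zero fa)"
  by (auto simp: supp_def fa_smult_def)

lemma finite_supp_fa_add:
  "finite (supp (p :: 'a::monoid_add fa)) \<Longrightarrow> finite (supp q) \<Longrightarrow> finite (supp (fa_add p q))"
  by (rule finite_subset[OF supp_fa_add]) auto

lemma finite_supp_fa_smult: "finite (supp (p :: 'a::mult_zero fa)) \<Longrightarrow> finite (supp (fa_smult c p))"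
  by (rule finite_subset[OF supp_fa_smult]) auto

lemma supp_bracket: "supp (bracket p q) \<subseteq> supp (fa_mul p q) \<union> supp (fa_mul q p)"
  by (auto simp: supp_def bracket_def)

lemma finite_supp_bracket: "finite (supp p) \<Longrightarrow> finite (supp q) \<Longrightarrow> finite (supp (bracket p q))"
  using supp_bracket finite_supp_fa_mul finite_subset by (metis finite_UnI)

lemma finite_supp_fa_var: "finite (supp (fa_var x :: 'a::zero_neq_one fa))"
  by (rule finite_subset[of _ "{[x]}"]) (auto simp: supp_def fa_var_def)

lemma finite_supp_lie: "p \<in> lie \<Longrightarrow> finite (supp (p :: 'a::comm_ring_1 fa))"
proof (induction rule: lie.induct)
  case (lie_var x)
  show ?case by (rule finite_subset[of _ "{[x]}"]) (auto simp: supp_def fa_var_def)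
next
  case lie_zero
  show ?case by (simp add: supp_def fa_zero_def)
qed (auto intro: finite_supp_fa_add finite_supp_fa_smult finite_supp_bracket)

lemma finite_supp_lnc:
  "finite (supp X) \<Longrightarrow> \<forall>y\<in>set ys. finite (supp y) \<Longrightarrow> finite (supp (lnc X ys :: 'a::comm_ring_1 fa))"
  by (induction ys rule: rev_induct) (simp_all add: lnc_def finite_supp_bracket)

lemma lnc_in_lie: "X \<in> lie \<Longrightarrow> set ys \<subseteq> lie \<Longrightarrow> lnc X ys \<in> lie"
  by (induction ys rule: rev_induct) (simp_all add: lnc_def lie_bracket)

lemma finite_supp_fa_prod:
  assumes "\<And>x. finite (supp (\<sigma> x :: 'a::comm_ring_1 fa))"
  shows "finite (supp (fa_prod (map \<sigma> u)))"
proof (induction u)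
  case Nil
  show ?case by (rule finite_subset[of _ "{[]}"]) (auto simp: fa_prod_def supp_def fa_one_def)
next
  case (Cons x u)
  then show ?case using assms by (simp add: fa_prod_def finite_supp_fa_mul)
qed

lemma supp_subst: "supp (subst \<sigma> p) \<subseteq> (\<Union>u\<in>supp p. supp (fa_prod (map \<sigma> u)))"
proof
  fix w assume "w \<in> supp (subst \<sigma> p)"
  then have "(\<Sum>u\<in>supp p. p u * fa_prod (map \<sigma> u) w) \<noteq> 0" by (simp add: supp_def subst_def)
  then obtain u where "u \<in> supp p" "p u * fa_prod (map \<sigma> u) w \<noteq> 0"
    by (metis (no_types, lifting) sum.neutral)
  then show "w \<in> (\<Union>u\<in>supp p. supp (fa_prod (map \<sigma> u)))" by (auto simp: supp_def)
qed

lemma finite_supp_subst: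
  fixes p :: "'a::comm_ring_1 fa"
  assumes "finite (supp p)" "\<And>x. finite (supp (\<sigma> x))"
  shows "finite (supp (subst \<sigma> p))"
  using assms finite_supp_fa_prod by (blast intro: finite_subset[OF supp_subst])

lemma sum_lessThan_3: "(\<Sum>k<(3::nat). f k) = f 0 + f 1 + (f 2 :: 'a::comm_monoid_add)"
  by (simp add: eval_nat_numeral add.assoc)

lemma mmul_assoc: "mmul (mmul A B) C = mmul A (mmul B C)"
  by (rule ext)+ (simp add: mmul_def sum_lessThan_3 algebra_simps)

lemma mmul_mone_left: "i < 3 \<Longrightarrow> mmul mone B i j = B i j"
  by (auto simp: mmul_def mone_def sum_lessThan_3 eval_nat_numeral less_Suc_eq)

lemma mmul_mone_right: "j < 3 \<Longrightarrow> mmul A mone i j = A i j"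
  by (auto simp: mmul_def mone_def sum_lessThan_3 eval_nat_numeral less_Suc_eq)

lemma mmul_cong:
  assumes "\<And>k. k < 3 \<Longrightarrow> A i k = A' i k" "\<And>k. k < 3 \<Longrightarrow> B k j = B' k j"
  shows "mmul A B i j = mmul A' B' i j"
  using assms by (simp add: mmul_def)

lemma mprod_append: "i < 3 \<Longrightarrow> j < 3 \<Longrightarrow> mprod (u @ v) i j = mmul (mprod u) (mprod v) i j"
proof (induction u arbitrary: i)
  case Nil
  then show ?case by (simp add: mprod_def mmul_mone_left)
next
  case (Cons x u)
  have "mprod ((x # u) @ v) i j = mmul x (mprod (u @ v)) i j" by (simp add: mprod_def)
  also have "\<dots> = mmul x (mmul (mprod u) (mprod v)) i j"
    using Cons by (intro mmul_cong) auto
  finally show ?case by (simp add: mprod_def mmul_assoc)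
qed

lemma evalM_eq_sum_superset:
  assumes "finite U" "supp p \<subseteq> U"
  shows "evalM \<phi> p i j = (\<Sum>w\<in>U. p w * mprod (map \<phi> w) i j)"
  unfolding evalM_def using assms by (intro sum.mono_neutral_left) (auto simp: supp_def)

lemma evalM_fa_add:
  assumes "finite (supp p)" "finite (supp q)"
  shows "evalM \<phi> (fa_add p q) i j = evalM \<phi> p i j + evalM \<phi> q i j"
proof -
  let ?U = "supp p \<union> supp q"
  have "evalM \<phi> (fa_add p q) i j = (\<Sum>w\<in>?U. fa_add p q w * mprod (map \<phi> w) i j)"
    using assms supp_fa_add by (intro evalM_eq_sum_superset) auto
  also have "\<dots> = (\<Sum>w\<in>?U. p w * mprod (map \<phi> w) i j) + (\<Sum>w\<in>?U. q w * mprod (map \<phi> w) i j)"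
    by (simp add: fa_add_def distrib_right sum.distrib)
  also have "\<dots> = evalM \<phi> p i j + evalM \<phi> q i j"
    using evalM_eq_sum_superset[of ?U p \<phi> i j] evalM_eq_sum_superset[of ?U q \<phi> i j] assms by simp
  finally show ?thesis .
qed

lemma evalM_fa_smult:
  assumes "finite (supp p)"
  shows "evalM \<phi> (fa_smult c p) i j = c * evalM \<phi> p i j"
proof -
  have "evalM \<phi> (fa_smult c p) i j = (\<Sum>w\<in>supp p. fa_smult c p w * mprod (map \<phi> w) i j)"
    using assms supp_fa_smult by (intro evalM_eq_sum_superset) auto
  then show ?thesis by (simp add: fa_smult_def evalM_def sum_distrib_left mult.assoc)
qed

lemma evalM_fa_var: "j < 3 \<Longrightarrow> evalM \<phi> (fa_var x :: 'a::comm_ring_1 fa) i j = \<phi> x i j"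
  by (cases "(1::'a) = 0") (auto simp: evalM_def supp_def fa_var_def mprod_def mmul_mone_right)

lemma evalM_fa_one: "i < 3 \<Longrightarrow> j < 3 \<Longrightarrow> evalM \<phi> (fa_one :: 'a::comm_ring_1 fa) i j = mone i j"
  by (cases "(1::'a) = 0") (auto simp: evalM_def fa_one_def mprod_def supp_def mone_def)

lemma evalM_fa_mul:
  fixes p q :: "'a::comm_ring_1 fa"
  assumes fp: "finite (supp p)" and fq: "finite (supp q)" and ij: "i < 3" "j < 3"
  shows "evalM \<phi> (fa_mul p q) i j = mmul (evalM \<phi> p) (evalM \<phi> q) i j"
proof -
  define M where "M w = mprod (map \<phi> w) i j" for w
  define A where "A = supp p \<times> supp q"
  define U where "U = (\<lambda>(u, v). u @ v) ` A"
  define T where "T = Sigma U (\<lambda>w. {0..length w})"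
  define T' where "T' = {ws \<in> T. (take (snd ws) (fst ws), drop (snd ws) (fst ws)) \<in> A}"
  have fU: "finite U" using fp fq by (simp add: U_def A_def)
  have "evalM \<phi> (fa_mul p q) i j = (\<Sum>w\<in>U. fa_mul p q w * M w)"
    unfolding M_def using supp_fa_mul fU by (intro evalM_eq_sum_superset) (auto simp: U_def A_def)
  also have "\<dots> = (\<Sum>w\<in>U. \<Sum>s\<in>{0..length w}. p (take s w) * q (drop s w) * M w)"
    by (simp add: fa_mul_def sum_distrib_right)
  also have "\<dots> = (\<Sum>ws\<in>T. p (take (snd ws) (fst ws)) * q (drop (snd ws) (fst ws)) * M (fst ws))"
    unfolding T_def by (subst sum.Sigma) (auto simp: fU split_def)
  also have "\<dots> = (\<Sum>ws\<in>T'. p (take (snd ws) (fst ws)) * q (drop (snd ws) (fst ws)) * M (fst ws))"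
    using fU by (intro sum.mono_neutral_right) (auto simp: T_def T'_def A_def supp_def)
  also have "\<dots> = (\<Sum>(u, v)\<in>A. p u * q v * M (u @ v))"
    by (rule sum.reindex_bij_witness[of _ "\<lambda>(u, v). (u @ v, length u)"
        "\<lambda>ws. (take (snd ws) (fst ws), drop (snd ws) (fst ws))"])
      (auto simp: T'_def T_def U_def min_def)
  also have "\<dots> = (\<Sum>u\<in>supp p. \<Sum>v\<in>supp q. \<Sum>k<3.
      (p u * mprod (map \<phi> u) i k) * (q v * mprod (map \<phi> v) k j))"
    unfolding A_def M_def sum.cartesian_product[symmetric]
    by (intro sum.cong refl) (simp add: mprod_append[OF ij] mmul_def sum_distrib_left mult_ac)
  also have "\<dots> = mmul (evalM \<phi> p) (evalM \<phi> q) i j"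
    unfolding mmul_def evalM_def sum_product
    by (subst sum.swap) (simp add: sum.swap[of _ "{..<3}"])
  finally show ?thesis .
qed

lemma evalM_bracket:
  fixes p q :: "'a::comm_ring_1 fa"
  assumes "finite (supp p)" "finite (supp q)" "i < 3" "j < 3"
  shows "evalM \<phi> (bracket p q) i j = mmul (evalM \<phi> p) (evalM \<phi> q) i j - mmul (evalM \<phi> q) (evalM \<phi> p) i j"
proof -
  have "bracket p q = fa_add (fa_mul p q) (fa_smult (- 1) (fa_mul q p))"
    by (rule ext) (simp add: bracket_def fa_add_def fa_smult_def)
  then show ?thesis
    using assms by (simp add: evalM_fa_add evalM_fa_smult finite_supp_fa_mul finite_supp_fa_smult evalM_fa_mul)
qed

lemma evalM_fa_prod:
  assumes fin: "\<And>x. finite (supp (\<sigma> x :: 'a::comm_ring_1 fa))" and "i < 3" "j < 3"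
  shows "evalM \<phi> (fa_prod (map \<sigma> u)) i j = mprod (map (\<lambda>x. evalM \<phi> (\<sigma> x)) u) i j"
  using \<open>i < 3\<close>
proof (induction u arbitrary: i)
  case Nil
  then show ?case using \<open>j < 3\<close> by (simp add: fa_prod_def mprod_def evalM_fa_one)
next
  case (Cons x u)
  have "evalM \<phi> (fa_prod (map \<sigma> (x # u))) i j = mmul (evalM \<phi> (\<sigma> x)) (evalM \<phi> (fa_prod (map \<sigma> u))) i j"
    using Cons.prems \<open>j < 3\<close> fin finite_supp_fa_prod[of \<sigma>, OF fin, of u] by (simp add: fa_prod_def evalM_fa_mul)
  also have "\<dots> = mmul (evalM \<phi> (\<sigma> x)) (mprod (map (\<lambda>x. evalM \<phi> (\<sigma> x)) u)) i j"
    using Cons.IH by (intro mmul_cong) auto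
  finally show ?case by (simp add: mprod_def)
qed

lemma evalM_subst:
  fixes p :: "'a::comm_ring_1 fa"
  assumes fp: "finite (supp p)" and fin: "\<And>x. finite (supp (\<sigma> x))" and ij: "i < 3" "j < 3"
  shows "evalM \<phi> (subst \<sigma> p) i j = evalM (\<lambda>x. evalM \<phi> (\<sigma> x)) p i j"
proof -
  define F where "F u = fa_prod (map \<sigma> u)" for u
  define U where "U = (\<Union>u\<in>supp p. supp (F u))"
  define M where "M w = mprod (map \<phi> w) i j" for w
  have fU: "finite U" using fp finite_supp_fa_prod[of \<sigma>, OF fin] by (simp add: U_def F_def)
  have "evalM \<phi> (subst \<sigma> p) i j = (\<Sum>w\<in>U. subst \<sigma> p w * M w)"
    unfolding M_def using fU supp_subst[of \<sigma> p] by (intro evalM_eq_sum_superset) (auto simp: U_def F_def)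
  also have "\<dots> = (\<Sum>u\<in>supp p. p u * (\<Sum>w\<in>U. F u w * M w))"
    by (simp add: subst_def F_def sum_distrib_right sum_distrib_left mult.assoc sum.swap[of _ U])
  also have "\<dots> = (\<Sum>u\<in>supp p. p u * evalM \<phi> (F u) i j)"
  proof (intro sum.cong refl)
    fix u assume "u \<in> supp p"
    then have "supp (F u) \<subseteq> U" by (auto simp: U_def)
    then show "p u * (\<Sum>w\<in>U. F u w * M w) = p u * evalM \<phi> (F u) i j"
      unfolding M_def using evalM_eq_sum_superset[OF fU, of "F u" \<phi> i j] by simp
  qed
  also have "\<dots> = evalM (\<lambda>x. evalM \<phi> (\<sigma> x)) p i j"
    unfolding F_def evalM_fa_prod[OF fin ij] by (simp add: evalM_def)
  finally show ?thesis .
qed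

section \<open>Commutators of type \<open>(1,1)\<close> evaluated in \<open>UT\<^sub>3\<close>\<close>

lemma graded_UT3_subst_Y:
  "graded_UT3_subst \<phi> \<Longrightarrow> a < 3 \<Longrightarrow> b < 3 \<Longrightarrow> a \<noteq> b \<Longrightarrow> \<phi> (Y k) a b = 0"
  unfolding graded_UT3_subst_def by force

lemma graded_UT3_subst_Z:
  "graded_UT3_subst \<phi> \<Longrightarrow> a < 3 \<Longrightarrow> b < 3 \<Longrightarrow> b \<noteq> Suc a \<Longrightarrow> \<phi> (Z k) a b = 0"
  unfolding graded_UT3_subst_def by force

lemma graded_UT3_substI:
  assumes "graded_UT3_subst \<phi>" "\<And>v. vdeg (r v) = vdeg v"
    and "\<And>v a b. a < 3 \<Longrightarrow> b < 3 \<Longrightarrow> \<psi> v a b \<noteq> 0 \<Longrightarrow> \<phi> (r v) a b \<noteq> 0"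
  shows "graded_UT3_subst \<psi>"
  using assms unfolding graded_UT3_subst_def by metis

lemma mmul_diag_right:
  assumes "\<And>l. l < 3 \<Longrightarrow> l \<noteq> j \<Longrightarrow> D l j = 0" "j < 3"
  shows "mmul E D i j = E i j * D j j"
proof -
  have "mmul E D i j = (\<Sum>l<3. if l = j then E i j * D j j else 0)"
    unfolding mmul_def using assms(1) by (intro sum.cong) auto
  then show ?thesis using assms(2) by simp
qed

lemma mmul_diag_left:
  assumes "\<And>l. l < 3 \<Longrightarrow> l \<noteq> i \<Longrightarrow> D i l = 0" "i < 3"
  shows "mmul D E i j = D i i * E i j"
proof -
  have "mmul D E i j = (\<Sum>l<3. if l = i then D i i * E i j else 0)"
    unfolding mmul_def using assms(1) by (intro sum.cong) auto
  then show ?thesis using assms(2) by simp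
qed

lemma mmul_superdiag:
  assumes "\<And>a b. a < 3 \<Longrightarrow> b < 3 \<Longrightarrow> b \<noteq> Suc a \<Longrightarrow> A a b = 0"
    and "\<And>a b. a < 3 \<Longrightarrow> b < 3 \<Longrightarrow> b \<noteq> Suc a \<Longrightarrow> B a b = 0"
    and "i < 3" "j < 3"
  shows "mmul A B i j = (if i = 0 \<and> j = 2 then A 0 1 * B 1 2 else 0)"
proof -
  have "mmul A B i j = A i 0 * B 0 j + A i 1 * B 1 j + A i 2 * B 2 j"
    by (simp add: mmul_def sum_lessThan_3)
  moreover have "i = 0 \<or> i = 1 \<or> i = 2" "j = 0 \<or> j = 1 \<or> j = 2" using assms(3,4) by auto
  ultimately show ?thesis using assms(1,2) by (elim disjE) (simp_all add: eval_nat_numeral)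
qed

definition diag_gap :: "(var \<Rightarrow> 'a::comm_ring_1 mat) \<Rightarrow> nat \<Rightarrow> nat \<Rightarrow> nat \<Rightarrow> 'a" where
  "diag_gap \<phi> a b k = \<phi> (Y k) b b - \<phi> (Y k) a a"

lemma evalM_bracket_Y:
  fixes X :: "'a::comm_ring_1 fa"
  assumes "finite (supp X)" and \<phi>: "graded_UT3_subst \<phi>" and ij: "i < 3" "j < 3"
  shows "evalM \<phi> (bracket X (fa_var (Y k))) i j = evalM \<phi> X i j * diag_gap \<phi> i j k"
proof -
  define D where "D = evalM \<phi> (fa_var (Y k) :: 'a fa)"
  have D: "a < 3 \<Longrightarrow> b < 3 \<Longrightarrow> D a b = \<phi> (Y k) a b" for a b by (simp add: D_def evalM_fa_var)
  have "evalM \<phi> (bracket X (fa_var (Y k))) i j = mmul (evalM \<phi> X) D i j - mmul D (evalM \<phi> X) i j"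
    using evalM_bracket[OF assms(1) finite_supp_fa_var ij] by (simp add: D_def)
  also have "\<dots> = evalM \<phi> X i j * D j j - D i i * evalM \<phi> X i j"
    using D graded_UT3_subst_Y[OF \<phi>] ij by (simp add: mmul_diag_right mmul_diag_left)
  finally show ?thesis using D ij by (simp add: diag_gap_def algebra_simps)
qed

lemma evalM_lnc_Ys:
  fixes X :: "'a::comm_ring_1 fa"
  assumes "finite (supp X)" "graded_UT3_subst \<phi>" "i < 3" "j < 3"
  shows "evalM \<phi> (lnc X (map (\<lambda>k. fa_var (Y k)) ks)) i j =
    evalM \<phi> X i j * prod_list (map (diag_gap \<phi> i j) ks)"
proof (induction ks rule: rev_induct)
  case Nil
  then show ?case by (simp add: lnc_def)
next
  case (snoc k ks)
  have "finite (supp (lnc X (map (\<lambda>k. fa_var (Y k)) ks)))"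
    using assms(1) finite_supp_fa_var by (intro finite_supp_lnc) auto
  then show ?case
    using evalM_bracket_Y[OF _ assms(2-4)] snoc by (simp add: lnc_def mult.assoc)
qed

lemma evalM_bracket_Z:
  fixes X :: "'a::comm_ring_1 fa"
  assumes "finite (supp X)" and \<phi>: "graded_UT3_subst \<phi>" and ij: "i < 3" "j < 3"
    and X: "\<And>a b. a < 3 \<Longrightarrow> b < 3 \<Longrightarrow> b \<noteq> Suc a \<Longrightarrow> evalM \<phi> X a b = 0"
  shows "evalM \<phi> (bracket X (fa_var (Z c))) i j =
    (if i = 0 \<and> j = 2 then evalM \<phi> X 0 1 * \<phi> (Z c) 1 2 - \<phi> (Z c) 0 1 * evalM \<phi> X 1 2 else 0)"
proof -
  define D where "D = evalM \<phi> (fa_var (Z c) :: 'a fa)"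
  have D: "a < 3 \<Longrightarrow> b < 3 \<Longrightarrow> D a b = \<phi> (Z c) a b" for a b by (simp add: D_def evalM_fa_var)
  have "evalM \<phi> (bracket X (fa_var (Z c))) i j = mmul (evalM \<phi> X) D i j - mmul D (evalM \<phi> X) i j"
    using evalM_bracket[OF assms(1) finite_supp_fa_var ij] by (simp add: D_def)
  also have "\<dots> = (if i = 0 \<and> j = 2 then evalM \<phi> X 0 1 * D 1 2 - D 0 1 * evalM \<phi> X 1 2 else 0)"
  proof -
    have Dz: "D a b = 0" if "a < 3" "b < 3" "b \<noteq> Suc a" for a b
      using D graded_UT3_subst_Z[OF \<phi>] that by simp
    show ?thesis using mmul_superdiag[OF X Dz ij] mmul_superdiag[OF Dz X ij] by simp
  qed
  finally show ?thesis using D by simp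
qed

section \<open>Type \<open>(1,1)\<close> polynomials as commutative polynomials\<close>

definition cp_eval :: "(nat \<Rightarrow> 'a::comm_ring_1) \<Rightarrow> 'a cpoly \<Rightarrow> 'a" where
  "cp_eval \<xi> h = (\<Sum>m\<in>cp_supp h. h m * prod_mset (image_mset \<xi> m))"

lemma cp_eval_eq_sum_superset:
  assumes "finite A" "cp_supp h \<subseteq> A"
  shows "cp_eval \<xi> h = (\<Sum>m\<in>A. h m * prod_mset (image_mset \<xi> m))"
  unfolding cp_eval_def using assms by (intro sum.mono_neutral_left) (auto simp: cp_supp_def)

lemma cp_eval_zero: "cp_eval \<xi> cp_zero = 0"
  by (simp add: cp_eval_def cp_zero_def cp_supp_def)

lemma cp_eval_add:
  assumes "finite (cp_supp p)" "finite (cp_supp q)"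
  shows "cp_eval \<xi> (cp_add p q) = cp_eval \<xi> p + cp_eval \<xi> q"
proof -
  let ?A = "cp_supp p \<union> cp_supp q"
  have "cp_eval \<xi> (cp_add p q) = (\<Sum>m\<in>?A. cp_add p q m * prod_mset (image_mset \<xi> m))"
    using assms cp_supp_add by (intro cp_eval_eq_sum_superset) auto
  also have "\<dots> = (\<Sum>m\<in>?A. p m * prod_mset (image_mset \<xi> m)) + (\<Sum>m\<in>?A. q m * prod_mset (image_mset \<xi> m))"
    by (simp add: cp_add_def distrib_right sum.distrib)
  also have "\<dots> = cp_eval \<xi> p + cp_eval \<xi> q"
    using cp_eval_eq_sum_superset[of ?A p \<xi>] cp_eval_eq_sum_superset[of ?A q \<xi>] assms by simp
  finally show ?thesis .
qed

lemma cp_eval_smult: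
  assumes "finite (cp_supp p)"
  shows "cp_eval \<xi> (cp_smult c p) = c * cp_eval \<xi> p"
proof -
  have "cp_eval \<xi> (cp_smult c p) = (\<Sum>m\<in>cp_supp p. cp_smult c p m * prod_mset (image_mset \<xi> m))"
    using assms cp_supp_smult by (intro cp_eval_eq_sum_superset) auto
  then show ?thesis by (simp add: cp_smult_def cp_eval_def sum_distrib_left mult.assoc)
qed

lemma cp_eval_mult_var: "cp_eval \<xi> (cp_mult_var x h) = \<xi> x * cp_eval \<xi> h"
proof -
  have "cp_eval \<xi> (cp_mult_var x h) =
      (\<Sum>m\<in>cp_supp h. cp_mult_var x h (add_mset x m) * prod_mset (image_mset \<xi> (add_mset x m)))"
    unfolding cp_eval_def cp_supp_mult_var by (subst sum.reindex) (simp_all add: inj_on_def)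
  then show ?thesis by (simp add: cp_eval_def cp_mult_var_def sum_distrib_left mult_ac)
qed

lemma cp_eval_rename:
  assumes "strict_mono \<rho>"
  shows "cp_eval \<xi> (cp_rename \<rho> h) = cp_eval (\<xi> \<circ> pair_ren \<rho>) h"
proof -
  have "cp_eval \<xi> (cp_rename \<rho> h) =
      (\<Sum>m\<in>cp_supp h. cp_rename \<rho> h (mon_ren \<rho> m) * prod_mset (image_mset \<xi> (mon_ren \<rho> m)))"
    unfolding cp_eval_def cp_supp_rename[OF assms]
    using strict_mono_imp_inj_on[OF strict_mono_mon_ren[OF assms]]
    by (subst sum.reindex) (simp_all add: inj_on_def)
  moreover have "image_mset \<xi> (mon_ren \<rho> m) = image_mset (\<xi> \<circ> pair_ren \<rho>) m" for m
    by (simp add: mon_ren_def image_mset.compositionality)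
  ultimately show ?thesis by (simp add: cp_eval_def cp_rename_mon_ren[OF assms])
qed

text \<open>The commuting variable \<open>x\<^sub>2\<^sub>k\<close> records an occurrence of \<open>y\<^sub>k\<close> between \<open>z\<^sub>1\<close> and \<open>z\<^sub>2\<close>,
  and \<open>x\<^sub>2\<^sub>k\<^sub>+\<^sub>1\<close> one after \<open>z\<^sub>2\<close>. The former contributes the gap of the diagonal of \<open>y\<^sub>k\<close>
  across the entry \<open>(a, a + 1)\<close> occupied by \<open>z\<^sub>1\<close>, the latter the gap across the corner \<open>(0, 2)\<close>.\<close>

definition var_value :: "(var \<Rightarrow> 'a::comm_ring_1 mat) \<Rightarrow> nat \<Rightarrow> nat \<Rightarrow> nat \<Rightarrow> 'a" where
  "var_value \<phi> a b c = (if even c then diag_gap \<phi> a b (c div 2) else diag_gap \<phi> 0 2 (c div 2))"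

definition corner_value :: "(var \<Rightarrow> 'a::comm_ring_1 mat) \<Rightarrow> 'a cpoly \<Rightarrow> 'a" where
  "corner_value \<phi> h = \<phi> (Z 1) 0 1 * \<phi> (Z 2) 1 2 * cp_eval (var_value \<phi> 0 1) h
     - \<phi> (Z 1) 1 2 * \<phi> (Z 2) 0 1 * cp_eval (var_value \<phi> 1 2) h"

definition represents :: "'a::comm_ring_1 fa \<Rightarrow> 'a cpoly \<Rightarrow> bool" where
  "represents L h \<longleftrightarrow> finite (supp L) \<and> finite (cp_supp h) \<and>
     (\<forall>\<phi>. graded_UT3_subst \<phi> \<longrightarrow>
        (\<forall>i<3. \<forall>j<3. evalM \<phi> L i j = (if i = 0 \<and> j = 2 then corner_value \<phi> h else 0)))"

lemma representsD:
  assumes "represents L h"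
  shows "finite (supp L)" "finite (cp_supp h)"
    "\<And>\<phi> i j. graded_UT3_subst \<phi> \<Longrightarrow> i < 3 \<Longrightarrow> j < 3 \<Longrightarrow>
       evalM \<phi> L i j = (if i = 0 \<and> j = 2 then corner_value \<phi> h else 0)"
  using assms unfolding represents_def by blast+

lemma representsI:
  assumes "finite (supp L)" "finite (cp_supp h)"
    "\<And>\<phi> i j. graded_UT3_subst \<phi> \<Longrightarrow> i < 3 \<Longrightarrow> j < 3 \<Longrightarrow>
       evalM \<phi> L i j = (if i = 0 \<and> j = 2 then corner_value \<phi> h else 0)"
  shows "represents L h"
  using assms unfolding represents_def by blast

lemma represents_zero: "represents (fa_zero :: 'a::comm_ring_1 fa) cp_zero"
  by (rule representsI)
    (simp_all add: supp_def fa_zero_def cp_supp_def cp_zero_def evalM_def corner_value_def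
      cp_eval_zero[unfolded cp_zero_def])

lemma represents_add:
  fixes L L' :: "'a::comm_ring_1 fa"
  assumes L: "represents L h" and L': "represents L' h'"
  shows "represents (fa_add L L') (cp_add h h')"
proof (rule representsI)
  note fin = representsD(1,2)[OF L] representsD(1,2)[OF L']
  show "finite (supp (fa_add L L'))" using fin by (intro finite_supp_fa_add)
  show "finite (cp_supp (cp_add h h'))" using fin cp_supp_add finite_subset by blast
  fix \<phi> :: "var \<Rightarrow> 'a mat" and i j :: nat assume "graded_UT3_subst \<phi>" "i < 3" "j < 3"
  then show "evalM \<phi> (fa_add L L') i j = (if i = 0 \<and> j = 2 then corner_value \<phi> (cp_add h h') else 0)"
    using representsD(3)[OF L] representsD(3)[OF L'] fin
    by (simp add: evalM_fa_add corner_value_def cp_eval_add algebra_simps)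
qed

lemma represents_smult:
  fixes L :: "'a::comm_ring_1 fa"
  assumes L: "represents L h"
  shows "represents (fa_smult c L) (cp_smult c h)"
proof (rule representsI)
  note fin = representsD(1,2)[OF L]
  show "finite (supp (fa_smult c L))" using fin by (intro finite_supp_fa_smult)
  show "finite (cp_supp (cp_smult c h))" using fin cp_supp_smult finite_subset by blast
  fix \<phi> :: "var \<Rightarrow> 'a mat" and i j :: nat assume "graded_UT3_subst \<phi>" "i < 3" "j < 3"
  then show "evalM \<phi> (fa_smult c L) i j = (if i = 0 \<and> j = 2 then corner_value \<phi> (cp_smult c h) else 0)"
    using representsD(3)[OF L] fin
    by (simp add: evalM_fa_smult corner_value_def cp_eval_smult algebra_simps)
qed

definition block_indices :: "nat \<Rightarrow> (nat \<Rightarrow> nat) \<Rightarrow> nat list" where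
  "block_indices n a = concat (map (\<lambda>i. replicate (a i) i) [1..<n+1])"

lemma ys_block_eq: "ys_block n a = map (\<lambda>k. fa_var (Y k)) (block_indices n a)"
  by (simp add: ys_block_def block_indices_def map_concat comp_def)

definition cp_monomial :: "nat list \<Rightarrow> 'a::comm_ring_1 cpoly" where
  "cp_monomial L = (\<lambda>m. if m = mset L then 1 else 0)"

lemma cp_eval_monomial: "cp_eval \<xi> (cp_monomial L :: 'a::field cpoly) = prod_list (map \<xi> L)"
proof -
  have "cp_supp (cp_monomial L :: 'a cpoly) = {mset L}" by (auto simp: cp_supp_def cp_monomial_def)
  then show ?thesis by (simp add: cp_eval_def cp_monomial_def prod_mset_prod_list[symmetric])
qed

lemma represents_B11_element:
  "represents (lnc (fa_var (Z 1)) (ys_block n a @ [fa_var (Z 2)] @ ys_block n b) :: 'a::field fa)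
     (cp_monomial (map (\<lambda>k. 2 * k) (block_indices n a) @ map (\<lambda>k. 2 * k + 1) (block_indices n b)))"
    (is "represents _ ?h")
proof -
  define X1 where "X1 = (lnc (fa_var (Z 1)) (ys_block n a) :: 'a fa)"
  define X2 where "X2 = bracket X1 (fa_var (Z 2))"
  have eq: "lnc (fa_var (Z 1)) (ys_block n a @ [fa_var (Z 2)] @ ys_block n b) = lnc X2 (ys_block n b)"
    by (simp add: lnc_def X2_def X1_def)
  have fin1: "finite (supp X1)" and fin2: "finite (supp X2)"
    unfolding X2_def X1_def ys_block_eq
    by (auto intro!: finite_supp_bracket finite_supp_lnc finite_supp_fa_var)
  have "evalM \<phi> (lnc X2 (ys_block n b)) i j = (if i = 0 \<and> j = 2 then corner_value \<phi> ?h else 0)"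
    if \<phi>: "graded_UT3_subst \<phi>" and ij: "i < 3" "j < 3" for \<phi> i j
  proof -
    have X1: "evalM \<phi> X1 c d = \<phi> (Z 1) c d * prod_list (map (diag_gap \<phi> c d) (block_indices n a))"
      if "c < 3" "d < 3" for c d
      unfolding X1_def ys_block_eq
      using evalM_lnc_Ys[OF finite_supp_fa_var \<phi> that] evalM_fa_var[OF that(2), of \<phi> "Z 1"] by simp
    have "evalM \<phi> X1 c d = 0" if "c < 3" "d < 3" "d \<noteq> Suc c" for c d
      using X1 graded_UT3_subst_Z[OF \<phi>] that by simp
    then have X2: "evalM \<phi> X2 i j =
        (if i = 0 \<and> j = 2 then evalM \<phi> X1 0 1 * \<phi> (Z 2) 1 2 - \<phi> (Z 2) 0 1 * evalM \<phi> X1 1 2 else 0)"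
      unfolding X2_def using evalM_bracket_Z[OF fin1 \<phi> ij] by blast
    have "evalM \<phi> (lnc X2 (ys_block n b)) i j =
        evalM \<phi> X2 i j * prod_list (map (diag_gap \<phi> i j) (block_indices n b))"
      unfolding ys_block_eq using evalM_lnc_Ys[OF fin2 \<phi> ij] .
    then show ?thesis
      using X1[of 0 1] X1[of 1 2] X2
      by (auto simp: corner_value_def cp_eval_monomial var_value_def comp_def algebra_simps)
  qed
  moreover have "finite (supp (lnc X2 (ys_block n b)))"
    unfolding ys_block_eq using fin2 by (auto intro!: finite_supp_lnc finite_supp_fa_var)
  ultimately show ?thesis
    unfolding eq by (intro representsI) (auto simp: cp_supp_def cp_monomial_def)
qed

lemma B11_subset_lie: "B11 \<subseteq> (lie :: 'a::comm_ring_1 fa set)"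
  by (auto simp: B11_def ys_block_eq intro!: lnc_in_lie lie_var)

lemma represents_lin_span_B11:
  assumes "f \<in> lin_span (B11 :: 'a::field fa set)"
  shows "f \<in> lie" "\<exists>h. represents f h"
  using assms
proof (induction rule: lin_span.induct)
  case ls_zero
  { case 1 show ?case by (rule lie_zero) }
  { case 2 show ?case using represents_zero by blast }
next
  case (ls_step b p c)
  then obtain n a a' where b: "b = lnc (fa_var (Z 1)) (ys_block n a @ [fa_var (Z 2)] @ ys_block n a')"
    by (auto simp: B11_def)
  { case 1 show ?case using ls_step B11_subset_lie by (blast intro: lie.intros) }
  { case 2 show ?case
      using ls_step.IH(2) represents_add[OF represents_smult[OF represents_B11_element]] b by blast }
qed

fun rename_Y :: "(nat \<Rightarrow> nat) \<Rightarrow> var \<Rightarrow> var" where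
  "rename_Y \<rho> (Y i) = Y (\<rho> i)"
| "rename_Y \<rho> (Z i) = Z i"
| "rename_Y \<rho> (W i) = W i"

lemma vdeg_rename_Y: "vdeg (rename_Y \<rho> v) = vdeg v"
  by (cases v) auto

definition z1_comm_y :: "nat \<Rightarrow> var \<Rightarrow> 'a::comm_ring_1 fa" where
  "z1_comm_y k x = (if x = Z 1 then bracket (fa_var (Z 1)) (fa_var (Y k)) else fa_var x)"

lemma homogeneous_fa_var: "homogeneous_of (vdeg x) (fa_var x :: 'a::comm_ring_1 fa)"
proof -
  have "vdeg x < 3" by (cases x) auto
  then show ?thesis by (auto simp: homogeneous_of_def fa_var_def wdeg_def)
qed

lemma homogeneous_bracket_Z_Y: "homogeneous_of 1 (bracket (fa_var (Z a)) (fa_var (Y k)) :: 'a::comm_ring_1 fa)"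
proof -
  have "supp (fa_mul (fa_var x) (fa_var y) :: 'a fa) \<subseteq> {[x, y]}" for x y
    using supp_fa_mul[of "fa_var x :: 'a fa" "fa_var y"] by (auto simp: supp_def fa_var_def split: if_splits)
  then have "supp (bracket (fa_var (Z a)) (fa_var (Y k)) :: 'a fa) \<subseteq> {[Z a, Y k], [Y k, Z a]}"
    using supp_bracket[of "fa_var (Z a) :: 'a fa" "fa_var (Y k)"] by blast
  then show ?thesis unfolding homogeneous_of_def by (auto simp: supp_def wdeg_def)
qed

lemma graded_endo_rename_Y: "graded_endo (\<lambda>v. fa_var (rename_Y \<rho> v) :: 'a::comm_ring_1 fa)"
  unfolding graded_endo_def using homogeneous_fa_var vdeg_rename_Y by (metis lie_var)

lemma graded_endo_z1_comm_y: "graded_endo (z1_comm_y k :: var \<Rightarrow> 'a::comm_ring_1 fa)"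
  unfolding graded_endo_def z1_comm_y_def
  using homogeneous_bracket_Z_Y homogeneous_fa_var by (auto intro: lie.intros)

lemma represents_bracket_Y:
  fixes L :: "'a::field fa"
  assumes L: "represents L h"
  shows "represents (bracket L (fa_var (Y k))) (cp_mult_var (2 * k + 1) h)"
proof (rule representsI)
  note fin = representsD(1,2)[OF L]
  show "finite (supp (bracket L (fa_var (Y k))))" by (rule finite_supp_bracket[OF fin(1) finite_supp_fa_var])
  show "finite (cp_supp (cp_mult_var (2 * k + 1) h))" using fin by (simp add: cp_supp_mult_var)
  fix \<phi> :: "var \<Rightarrow> 'a mat" and i j :: nat assume \<phi>: "graded_UT3_subst \<phi>" and ij: "i < 3" "j < 3"
  have "corner_value \<phi> (cp_mult_var (2 * k + 1) h) = corner_value \<phi> h * diag_gap \<phi> 0 2 k"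
    by (simp add: corner_value_def cp_eval_mult_var var_value_def algebra_simps)
  then show "evalM \<phi> (bracket L (fa_var (Y k))) i j =
      (if i = 0 \<and> j = 2 then corner_value \<phi> (cp_mult_var (2 * k + 1) h) else 0)"
    using evalM_bracket_Y[OF fin(1) \<phi> ij] representsD(3)[OF L \<phi> ij] by simp
qed

lemma represents_subst_z1_comm_y:
  fixes L :: "'a::field fa"
  assumes L: "represents L h"
  shows "represents (subst (z1_comm_y k) L) (cp_mult_var (2 * k) h)"
proof (rule representsI)
  note fin = representsD(1,2)[OF L]
  have fin_\<sigma>: "finite (supp (z1_comm_y k x :: 'a fa))" for x
    using graded_endo_z1_comm_y finite_supp_lie by (auto simp: graded_endo_def)
  show "finite (supp (subst (z1_comm_y k) L))" using fin(1) fin_\<sigma> by (rule finite_supp_subst)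
  show "finite (cp_supp (cp_mult_var (2 * k) h))" using fin by (simp add: cp_supp_mult_var)
  fix \<phi> :: "var \<Rightarrow> 'a mat" and i j :: nat assume \<phi>: "graded_UT3_subst \<phi>" and ij: "i < 3" "j < 3"
  define \<psi> where "\<psi> = (\<lambda>v. evalM \<phi> (z1_comm_y k v :: 'a fa))"
  have \<psi>_Z1: "\<psi> (Z 1) a b = \<phi> (Z 1) a b * diag_gap \<phi> a b k" if "a < 3" "b < 3" for a b
    using evalM_bracket_Y[OF finite_supp_fa_var \<phi> that] evalM_fa_var[OF that(2), of \<phi> "Z 1"]
    by (simp add: \<psi>_def z1_comm_y_def)
  have \<psi>_other: "\<psi> v a b = \<phi> v a b" if "v \<noteq> Z 1" "a < 3" "b < 3" for v a b
    using that by (simp add: \<psi>_def z1_comm_y_def evalM_fa_var)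
  have "graded_UT3_subst \<psi>"
  proof (rule graded_UT3_substI[where r = id, OF \<phi>])
    fix v a b assume "a < 3" "b < 3" "\<psi> v a b \<noteq> 0"
    then show "\<phi> (id v) a b \<noteq> 0" by (metis \<psi>_Z1 \<psi>_other id_apply mult_zero_left)
  qed simp
  moreover have "var_value \<psi> a b = var_value \<phi> a b" if "a < 3" "b < 3" for a b
    using that by (intro ext) (simp add: var_value_def diag_gap_def \<psi>_other)
  ultimately have "evalM \<psi> L i j = (if i = 0 \<and> j = 2 then corner_value \<phi> (cp_mult_var (2 * k) h) else 0)"
    using representsD(3)[OF L _ ij] \<psi>_Z1[of 0 1] \<psi>_Z1[of 1 2] \<psi>_other[of "Z 2"]
    by (simp add: corner_value_def cp_eval_mult_var var_value_def algebra_simps)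
  then show "evalM \<phi> (subst (z1_comm_y k) L) i j =
      (if i = 0 \<and> j = 2 then corner_value \<phi> (cp_mult_var (2 * k) h) else 0)"
    using evalM_subst[OF fin(1) fin_\<sigma> ij] by (simp add: \<psi>_def)
qed

lemma represents_subst_rename_Y:
  fixes L :: "'a::field fa"
  assumes L: "represents L h" and \<rho>: "strict_mono \<rho>"
  shows "represents (subst (\<lambda>v. fa_var (rename_Y \<rho> v)) L) (cp_rename \<rho> h)"
proof (rule representsI)
  note fin = representsD(1,2)[OF L]
  show "finite (supp (subst (\<lambda>v. fa_var (rename_Y \<rho> v)) L))"
    using fin(1) finite_supp_fa_var by (rule finite_supp_subst)
  show "finite (cp_supp (cp_rename \<rho> h))" using fin by (simp add: cp_supp_rename[OF \<rho>])
  fix \<phi> :: "var \<Rightarrow> 'a mat" and i j :: nat assume \<phi>: "graded_UT3_subst \<phi>" and ij: "i < 3" "j < 3"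
  define \<psi> where "\<psi> = (\<lambda>v. evalM \<phi> (fa_var (rename_Y \<rho> v) :: 'a fa))"
  have \<psi>: "\<psi> v a b = \<phi> (rename_Y \<rho> v) a b" if "a < 3" "b < 3" for v a b
    using that by (simp add: \<psi>_def evalM_fa_var)
  have "graded_UT3_subst \<psi>"
    using \<phi> vdeg_rename_Y by (rule graded_UT3_substI) (simp add: \<psi>)
  moreover have "var_value \<psi> a b = var_value \<phi> a b \<circ> pair_ren \<rho>" if "a < 3" "b < 3" for a b
    using that by (intro ext) (simp add: var_value_def diag_gap_def pair_ren_def \<psi>)
  ultimately have "evalM \<psi> L i j = (if i = 0 \<and> j = 2 then corner_value \<phi> (cp_rename \<rho> h) else 0)"
    using representsD(3)[OF L _ ij] \<psi>[of 0 1 "Z _"] \<psi>[of 1 2 "Z _"]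
    by (simp add: corner_value_def cp_eval_rename[OF \<rho>])
  then show "evalM \<phi> (subst (\<lambda>v. fa_var (rename_Y \<rho> v)) L) i j =
      (if i = 0 \<and> j = 2 then corner_value \<phi> (cp_rename \<rho> h) else 0)"
    using evalM_subst[OF fin(1) finite_supp_fa_var ij] by (simp add: \<psi>_def)
qed

lemma T_idealD:
  assumes "T_ideal J"
  shows "J \<subseteq> lie" "fa_zero \<in> J" "\<And>p q. p \<in> J \<Longrightarrow> q \<in> J \<Longrightarrow> fa_add p q \<in> J"
    "\<And>c p. p \<in> J \<Longrightarrow> fa_smult c p \<in> J" "\<And>p q. p \<in> J \<Longrightarrow> q \<in> lie \<Longrightarrow> bracket p q \<in> J"
    "\<And>p \<sigma>. p \<in> J \<Longrightarrow> graded_endo \<sigma> \<Longrightarrow> subst \<sigma> p \<in> J"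
  using assms unfolding T_ideal_def by blast+

lemma represents_ren_ideal:
  fixes J :: "'a::field fa set"
  assumes J: "T_ideal J" and G: "\<forall>g\<in>G. \<exists>L\<in>J. represents L g" and h: "h \<in> ren_ideal G"
  shows "\<exists>L\<in>J. represents L h"
  using h
proof (induction h rule: ren_ideal.induct)
  case zero
  then show ?case using T_idealD(2)[OF J] represents_zero by blast
next
  case (add p q)
  then show ?case using T_idealD(3)[OF J] represents_add by blast
next
  case (smult p c)
  then show ?case using T_idealD(4)[OF J] represents_smult by blast
next
  case (mult_var p x)
  then obtain L where L: "L \<in> J" "represents L p" by blast
  show ?case
  proof (cases "even x")
    case True
    then have "represents (subst (z1_comm_y (x div 2)) L) (cp_mult_var x p)"
      using represents_subst_z1_comm_y[OF L(2), of "x div 2"] by simp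
    then show ?thesis using T_idealD(6)[OF J L(1) graded_endo_z1_comm_y] by blast
  next
    case False
    then have "represents (bracket L (fa_var (Y (x div 2)))) (cp_mult_var x p)"
      using represents_bracket_Y[OF L(2), of "x div 2"] odd_two_times_div_two_succ[OF False] by metis
    then show ?thesis using T_idealD(5)[OF J L(1) lie_var] by blast
  qed
next
  case (rename p \<rho>)
  then show ?case
    using T_idealD(6)[OF J _ graded_endo_rename_Y] represents_subst_rename_Y by blast
qed (use G in blast)

lemma mem_T_ideal_if_same_representation:
  fixes f L :: "'a::field fa"
  assumes J: "T_ideal J" "I_UT3 \<subseteq> J" and L: "L \<in> J" "represents L h"
    and f: "f \<in> lie" "represents f h"
  shows "f \<in> J"
proof -
  define D where "D = fa_add f (fa_smult (- 1) L)"
  have "L \<in> lie" using L(1) T_idealD(1)[OF J(1)] by blast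
  then have "D \<in> lie" using f(1) unfolding D_def by (intro lie.intros)
  moreover have "evalM \<phi> D a b = 0" if "graded_UT3_subst \<phi>" "a < 3" "b < 3" for \<phi> a b
    using representsD[OF f(2)] representsD[OF L(2)] that
    by (simp add: D_def evalM_fa_add evalM_fa_smult finite_supp_fa_smult)
  ultimately have "D \<in> J" using J(2) unfolding I_UT3_def by blast
  moreover have "f = fa_add D L" by (rule ext) (simp add: D_def fa_add_def fa_smult_def)
  ultimately show ?thesis using T_idealD(3)[OF J(1) _ L(1)] by simp
qed

theorem ex_mem_T_gen_predecessors_type11:
  fixes f :: "nat \<Rightarrow> 'a::field fa"
  assumes "\<forall>i\<ge>1. type11 (f i)"
  shows "\<exists>i\<ge>2. f i \<in> T_gen ({f j | j. 1 \<le> j \<and> j < i} \<union> I_UT3)"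
proof -
  have f: "f i \<in> lie" "\<exists>h. represents (f i) h" if "i \<ge> 1" for i
    using assms that represents_lin_span_B11 by (auto simp: type11_def)
  define h where "h i = (if i \<ge> 1 then SOME h. represents (f i) h else cp_zero)" for i
  have h: "represents (f i) (h i)" if "i \<ge> 1" for i
    using someI_ex[OF f(2)[OF that]] that by (simp add: h_def)
  have "finite (cp_supp (h i))" for i
    using representsD(2)[OF h] by (cases "i \<ge> 1") (auto simp: h_def cp_supp_def cp_zero_def)
  then obtain i where i: "i \<ge> 2" "h i \<in> ren_ideal {h j | j. 1 \<le> j \<and> j < i}"
    using ex_mem_ren_ideal_predecessors by blast
  have "f i \<in> J" if J: "T_ideal J" "{f j | j. 1 \<le> j \<and> j < i} \<union> I_UT3 \<subseteq> J" for J
  proof -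
    have "\<forall>g\<in>{h j | j. 1 \<le> j \<and> j < i}. \<exists>L\<in>J. represents L g" using J(2) h by blast
    then obtain L where L: "L \<in> J" "represents L (h i)" using represents_ren_ideal[OF J(1) _ i(2)] by blast
    have "i \<ge> 1" "I_UT3 \<subseteq> J" using i(1) J(2) by auto
    then show ?thesis using mem_T_ideal_if_same_representation[OF J(1) _ L f(1) h] by simp
  qed
  then show ?thesis using i(1) by (auto simp: T_gen_def)
qed

lemma finite_basis_if_no_bad_sequence:
  fixes S :: "'b set" and C :: "'b set \<Rightarrow> 'b set"
  assumes "\<not> (\<exists>f :: nat \<Rightarrow> 'b. (\<forall>i\<ge>1. f i \<in> S) \<and> (\<forall>i\<ge>2. f i \<notin> C {f j | j. 1 \<le> j \<and> j < i}))"
  shows "\<exists>A. finite A \<and> A \<subseteq> S \<and> S \<subseteq> C A"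
proof (rule ccontr)
  assume "\<not> ?thesis"
  then have escape: "\<exists>x. x \<in> S \<and> x \<notin> C A" if "finite A" "A \<subseteq> S" for A
    using that by blast
  define pick where "pick xs = (SOME x. x \<in> S \<and> x \<notin> C (set xs))" for xs
  define f where "f i = pick (greedy_prefix pick (i - 1))" for i
  have prefix: "set (greedy_prefix pick n) = {f j | j. 1 \<le> j \<and> j < Suc n}" for n
    by (auto simp: greedy_prefix_eq_map[of pick n] f_def image_iff intro: exI[of _ "Suc _"])
  have pick: "pick xs \<in> S \<and> pick xs \<notin> C (set xs)" if "set xs \<subseteq> S" for xs
  proof -
    have "\<exists>x. x \<in> S \<and> x \<notin> C (set xs)" using escape[of "set xs"] that by blast
    then show ?thesis unfolding pick_def by (rule someI_ex)
  qed
  have in_S: "set (greedy_prefix pick n) \<subseteq> S" for n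
  proof (induction n)
    case (Suc n)
    then show ?case using pick[OF Suc.IH] by simp
  qed simp
  have "f i \<in> S \<and> f i \<notin> C {f j | j. 1 \<le> j \<and> j < i}" if "i \<ge> 1" for i
  proof -
    have "f i \<in> S \<and> f i \<notin> C (set (greedy_prefix pick (i - 1)))"
      unfolding f_def using pick in_S by blast
    moreover have "Suc (i - 1) = i" using that by simp
    ultimately show ?thesis using prefix[of "i - 1"] by simp
  qed
  then have "\<exists>f :: nat \<Rightarrow> 'b. (\<forall>i\<ge>1. f i \<in> S) \<and> (\<forall>i\<ge>2. f i \<notin> C {f j | j. 1 \<le> j \<and> j < i})"
    by (intro exI[of _ f]) auto
  with assms show False by contradiction
qed

theorem mainTheorem10:
  fixes dummy :: "'a::field"
  assumes "infinite (UNIV :: 'a set)"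
  shows "\<not> (\<exists>f :: nat \<Rightarrow> 'a fa. (\<forall>i\<ge>1. type11 (f i)) \<and>
            (\<forall>i\<ge>2. f i \<notin> T_gen ({f j | j. 1 \<le> j \<and> j < i} \<union> I_UT3)))
     \<and> (\<forall>J :: 'a fa set. T_ideal J \<and> I_UT3 \<subseteq> J \<longrightarrow>
          (\<exists>A. finite A \<and> A \<subseteq> {f \<in> J. type11 f} \<and>
               (\<forall>f\<in>J. type11 f \<longrightarrow> f \<in> T_gen (A \<union> I_UT3))))"
proof (intro conjI allI impI)
  show no_bad: "\<not> (\<exists>f :: nat \<Rightarrow> 'a fa. (\<forall>i\<ge>1. type11 (f i)) \<and>
      (\<forall>i\<ge>2. f i \<notin> T_gen ({f j | j. 1 \<le> j \<and> j < i} \<union> I_UT3)))"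
    using ex_mem_T_gen_predecessors_type11 by blast
  fix J :: "'a fa set"
  have "\<not> (\<exists>f :: nat \<Rightarrow> 'a fa. (\<forall>i\<ge>1. f i \<in> {f \<in> J. type11 f}) \<and>
      (\<forall>i\<ge>2. f i \<notin> T_gen ({f j | j. 1 \<le> j \<and> j < i} \<union> I_UT3)))"
    using no_bad by blast
  from finite_basis_if_no_bad_sequence[OF this]
  show "\<exists>A. finite A \<and> A \<subseteq> {f \<in> J. type11 f} \<and> (\<forall>f\<in>J. type11 f \<longrightarrow> f \<in> T_gen (A \<union> I_UT3))"
    by blast
qed

end
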